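(* Let $n\ge2$, let $Gr_n$ be the grid graph on $\{0,\dots,2^n\}^2$ with edges between vertices at $\ell_1$-distance $1$, directed edge set $E(Gr_n)=\{uv:v\in\{u+(1,0),u+(0,1)\}\}$, and the $\ell_1$-metric; let $th(uv)=1/|E(Gr_n)|$ for all $uv\in E(Gr_n)$. Let $T=\bigcup_{k=0}^{n-2}T_k$, $T_k=\{1,2,3,4\}^k$, $|t|=k$ for $t\in T_k$. Let $C_2,C_4\in[\tfrac12,\infty)$ and let $\{\mu_t\}_{t\in T}$ be signed measures on $V(Gr_n)$ of total mass $0$ such that for all $t\in T$: (P2) $\mathrm{dist}(\mathrm{supp}(\mu_t),\mathrm{supp}(\mu_{t'}))\ge C_2^{-1}2^{n-\max(|t|,|t'|)}$ for every $t'\in T\setminus\{t\}$; (P4) $|\mu_t(A)|\le C_4\min\{2^{-n-1-|t|},4^{-n}(\mathrm{diam}(A)+1)\}$ for every $A\subseteq V(Gr_n)$; (P5) there is $u\in V(Gr_n)$ such that $\mathrm{supp}(\mu_t)\cup\{u\}$ induces a connected subgraph. Then for all $f:V(Gr_n)\to\mathbb{R}$, $$\sum_{k=0}^{n-2}\Big(\sum_{t\in T_k}\Big|\int f\,d\mu_t\Big|^2\Big)^{1/2}\le C\sum_{uv\in E(Gr_n)}|f(u)-f(v)|\,th(uv),$$ where $C\le C_4(20+40C_2)$.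
   Context: $\mathrm{supp}(\mu)=\{v:\mu(\{v\})\ne0\}$; diam and dist use the $\ell_1$-metric. *)

theory Defs
  imports Complex_Main "HOL-Library.Extended_Real"
begin

type_synonym vtx = "int \<times> int"

definition grid_V :: "nat \<Rightarrow> vtx set" where
  "grid_V n = {0..2^n} \<times> {0..2^n}"

definition grid_E :: "nat \<Rightarrow> (vtx \<times> vtx) set" where
  "grid_E n = {(u, v). u \<in> grid_V n \<and> v \<in> grid_V n \<and>
      (v = (fst u + 1, snd u) \<or> v = (fst u, snd u + 1))}"

definition l1dist :: "vtx \<Rightarrow> vtx \<Rightarrow> real" where
  "l1dist u v = real_of_int (\<bar>fst u - fst v\<bar> + \<bar>snd u - snd v\<bar>)"

definition l1diam :: "vtx set \<Rightarrow> real" where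
  "l1diam A = (if A = {} then 0 else Max {l1dist u v | u v. u \<in> A \<and> v \<in> A})"

text \<open>Distance (l1) between two vertex sets, as an infimum in the extended reals
  (infinite if one of the sets is empty).\<close>
definition l1setdist :: "vtx set \<Rightarrow> vtx set \<Rightarrow> ereal" where
  "l1setdist A B = (INF p \<in> A \<times> B. ereal (l1dist (fst p) (snd p)))"

text \<open>A signed measure on V(Gr_n) is given by its point masses m : vtx => real;
  mass of A is the sum over A.\<close>
definition smeasure :: "(vtx \<Rightarrow> real) \<Rightarrow> vtx set \<Rightarrow> real" where
  "smeasure m A = (\<Sum>v\<in>A. m v)"

definition supp :: "nat \<Rightarrow> (vtx \<Rightarrow> real) \<Rightarrow> vtx set" where
  "supp n m = {v \<in> grid_V n. m v \<noteq> 0}"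

definition integral_m :: "nat \<Rightarrow> (vtx \<Rightarrow> real) \<Rightarrow> (vtx \<Rightarrow> real) \<Rightarrow> real" where
  "integral_m n f m = (\<Sum>v\<in>grid_V n. f v * m v)"

definition induces_connected :: "vtx set \<Rightarrow> bool" where
  "induces_connected S \<longleftrightarrow>
     (\<forall>x\<in>S. \<forall>y\<in>S. (x, y) \<in> {(a, b). a \<in> S \<and> b \<in> S \<and> l1dist a b = 1}\<^sup>*)"

text \<open>T_k = {1,2,3,4}^k as lists of length k; |t| = length t.\<close>
definition Tk :: "nat \<Rightarrow> nat list set" where
  "Tk k = {t. length t = k \<and> set t \<subseteq> {1,2,3,4}}"

definition Tall :: "nat \<Rightarrow> nat list set" where
  "Tall n = (\<Union>k\<in>{0..n-2}. Tk k)"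

end

(*
  Since every mu_t has total mass 0, a discrete co-area argument (lowering the top value of f
  one level at a time) reduces the inequality to vertex sets A: with
  Phi(A) = sum_k (sum_{t in T_k} mu_t(A)^2)^(1/2) it suffices that
  Phi(A) <= C4 (2 + 10 C2) 4^-n |dA|, where dA is the edge boundary of A; as |E| <= 25/8 4^n
  this gives the constant C4 (20 + 40 C2).  Splitting A and its complement into components,
  we may assume both sides connected.

  Let d be the smaller of the diameters of the two sides.  A discrete isoperimetric
  inequality gives d + 1 <= 2 |dA|.  On the coarse levels, where 2^(n-k)/C2 > d, property
  (P2) leaves at most one t whose mu_t charges the smaller side, and (P4) bounds that mass
  by C4 (d + 1) 4^-n.  On a fine level every t with mu_t(A) /= 0 has, by (P5), a support
  point p_t at the edge boundary of A, and these points are 2^(n-k)/C2 apart.  A local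
  isoperimetric argument (an uncrossed frame around p_t would enclose a whole side) shows
  that the square of radius about 2^(n-k)/(4 C2) around each p_t carries its own share of
  boundary edges, so at most 16 C2 |dA| / 2^(n-k) of the mu_t(A) are nonzero.  Together
  with the bound 2^(n-k) C4 4^-n / 2 from (P4), the fine levels contribute a geometric
  series in sqrt(2^(n-k)) summing to at most 10 C4 C2 |dA| 4^-n.
*)

theory Submission
  imports Defs "HOL-Analysis.L2_Norm"
begin

section \<open>Edge boundaries and connectivity in the grid\<close>

definition edge_boundary :: "('a \<times> 'a) set \<Rightarrow> 'a set \<Rightarrow> ('a \<times> 'a) set" where
  "edge_boundary E A = {e \<in> E. (fst e \<in> A) \<noteq> (snd e \<in> A)}"

lemma finite_edge_boundary: "finite E \<Longrightarrow> finite (edge_boundary E A)"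
  unfolding edge_boundary_def by simp

lemma edge_boundary_Diff:
  "E \<subseteq> V \<times> V \<Longrightarrow> edge_boundary E (V - A) = edge_boundary E A"
  unfolding edge_boundary_def by fastforce

lemma l1dist_commute: "l1dist u v = l1dist v u"
  unfolding l1dist_def by (simp add: abs_minus_commute)

lemma l1dist_eq_1_iff:
  "l1dist (a, b) (c, d) = 1 \<longleftrightarrow>
     (c = a + 1 \<and> d = b) \<or> (c = a \<and> d = b + 1) \<or> (a = c + 1 \<and> b = d) \<or> (a = c \<and> b = d + 1)"
  unfolding l1dist_def by (simp add: abs_if) arith

lemma mem_grid_V_iff: "(x, y) \<in> grid_V n \<longleftrightarrow> 0 \<le> x \<and> x \<le> 2^n \<and> 0 \<le> y \<and> y \<le> 2^n"
  unfolding grid_V_def by auto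

lemma finite_grid_V: "finite (grid_V n)"
  unfolding grid_V_def by simp

lemma card_grid_V: "card (grid_V n) = (2^n + 1)^2"
  unfolding grid_V_def by (simp add: card_cartesian_product power2_eq_square nat_add_distrib nat_power_eq)

lemma grid_E_subset: "grid_E n \<subseteq> grid_V n \<times> grid_V n"
  unfolding grid_E_def by auto

lemma finite_grid_E: "finite (grid_E n)"
  using finite_subset[OF grid_E_subset] finite_grid_V by blast

lemma l1dist_grid_E: "e \<in> grid_E n \<Longrightarrow> l1dist (fst e) (snd e) = 1"
  unfolding grid_E_def l1dist_def by auto

lemma adjacent_mem_edge_boundary:
  assumes "u \<in> grid_V n" "v \<in> grid_V n" "l1dist u v = 1" "(u \<in> A) \<noteq> (v \<in> A)"
  shows "(u, v) \<in> edge_boundary (grid_E n) A \<or> (v, u) \<in> edge_boundary (grid_E n) A"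
  using assms unfolding edge_boundary_def grid_E_def
  by (cases u, cases v) (auto simp: l1dist_eq_1_iff)

lemma int_discrete_ivt:
  fixes P :: "int \<Rightarrow> bool"
  assumes "P a \<noteq> P c"
  shows "\<exists>x. min a c \<le> x \<and> x < max a c \<and> P x \<noteq> P (x + 1)"
proof -
  have ivt: "\<exists>x. a \<le> x \<and> x < c \<and> P x \<noteq> P (x + 1)" if "a \<le> c" "P a \<noteq> P c" for a c
    using that
  proof (induction c rule: int_ge_induct)
    case base
    then show ?case by simp
  next
    case (step c)
    show ?case
    proof (cases "P c = P a")
      case True
      with step.prems show ?thesis using step.hyps by auto
    next
      case False
      then obtain x where "a \<le> x" "x < c" "P x \<noteq> P (x + 1)" using step.IH by blast
      then show ?thesis by auto
    qed
  qed
  show ?thesis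
  proof (cases "a \<le> c")
    case True
    then show ?thesis using ivt[of a c] assms by auto
  next
    case False
    then show ?thesis using ivt[of c a] assms by auto
  qed
qed

lemma boundary_edge_in_row:
  assumes "(a, y) \<in> grid_V n" "(c, y) \<in> grid_V n" "((a, y) \<in> A) \<noteq> ((c, y) \<in> A)"
  shows "\<exists>x. min a c \<le> x \<and> x < max a c \<and> ((x, y), (x + 1, y)) \<in> edge_boundary (grid_E n) A"
proof -
  obtain x where x: "min a c \<le> x" "x < max a c" "((x, y) \<in> A) \<noteq> ((x + 1, y) \<in> A)"
    using int_discrete_ivt[of "\<lambda>x. (x, y) \<in> A" a c] assms(3) by auto
  then have "(x, y) \<in> grid_V n" "(x + 1, y) \<in> grid_V n"
    using assms(1,2) by (auto simp: mem_grid_V_iff)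
  with x show ?thesis unfolding edge_boundary_def grid_E_def by auto
qed

lemma boundary_edge_in_column:
  assumes "(x, a) \<in> grid_V n" "(x, c) \<in> grid_V n" "((x, a) \<in> A) \<noteq> ((x, c) \<in> A)"
  shows "\<exists>y. min a c \<le> y \<and> y < max a c \<and> ((x, y), (x, y + 1)) \<in> edge_boundary (grid_E n) A"
proof -
  obtain y where y: "min a c \<le> y" "y < max a c" "((x, y) \<in> A) \<noteq> ((x, y + 1) \<in> A)"
    using int_discrete_ivt[of "\<lambda>y. (x, y) \<in> A" a c] assms(3) by auto
  then have "(x, y) \<in> grid_V n" "(x, y + 1) \<in> grid_V n"
    using assms(1,2) by (auto simp: mem_grid_V_iff)
  with y show ?thesis unfolding edge_boundary_def grid_E_def by auto
qed

lemma edge_boundary_nonempty: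
  assumes "x \<in> A" "y \<in> grid_V n - A" "A \<subseteq> grid_V n"
  shows "edge_boundary (grid_E n) A \<noteq> {}"
proof -
  obtain a b c d where xy: "x = (a, b)" "y = (c, d)" by fastforce
  have corner: "(c, b) \<in> grid_V n" and ab: "(a, b) \<in> grid_V n" "(c, d) \<in> grid_V n"
    using assms xy by (auto simp: mem_grid_V_iff)
  show ?thesis
  proof (cases "(c, b) \<in> A")
    case True
    then show ?thesis using boundary_edge_in_column[OF corner ab(2), of A] assms(2) xy by blast
  next
    case False
    then show ?thesis using boundary_edge_in_row[OF ab(1) corner, of A] assms(1) xy by blast
  qed
qed

lemma card_edge_boundary_pos:
  "x \<in> A \<Longrightarrow> y \<in> grid_V n - A \<Longrightarrow> A \<subseteq> grid_V n \<Longrightarrow> 0 < card (edge_boundary (grid_E n) A)"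
  using edge_boundary_nonempty finite_edge_boundary[OF finite_grid_E] by (simp add: card_gt_0_iff)

lemma induces_connected_crossing:
  assumes "induces_connected S" "x \<in> S" "y \<in> S" "P x" "\<not> P y"
  shows "\<exists>w w'. w \<in> S \<and> w' \<in> S \<and> l1dist w w' = 1 \<and> P w \<and> \<not> P w'"
proof -
  have "(x, y) \<in> {(a, b). a \<in> S \<and> b \<in> S \<and> l1dist a b = 1}\<^sup>*"
    using assms(1-3) unfolding induces_connected_def by blast
  then show ?thesis using assms(5)
  proof (induction rule: rtrancl_induct)
    case base
    then show ?case using assms(4) by simp
  next
    case (step z y)
    then show ?case by (cases "P z") blast+
  qed
qed

lemma not_induces_connected_split:
  assumes "\<not> induces_connected A"
  obtains A1 A2 where "A1 \<noteq> {}" "A2 \<noteq> {}" "A1 \<inter> A2 = {}" "A = A1 \<union> A2"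
    "\<forall>x\<in>A1. \<forall>y\<in>A2. l1dist x y \<noteq> 1"
proof -
  let ?R = "{(a, b). a \<in> A \<and> b \<in> A \<and> l1dist a b = 1}"
  obtain x y where xy: "x \<in> A" "y \<in> A" "(x, y) \<notin> ?R\<^sup>*"
    using assms unfolding induces_connected_def by blast
  define A1 where "A1 = {z \<in> A. (x, z) \<in> ?R\<^sup>*}"
  have "\<forall>a\<in>A1. \<forall>b\<in>A - A1. l1dist a b \<noteq> 1"
    unfolding A1_def by (auto intro: rtrancl_into_rtrancl)
  moreover have "x \<in> A1" "y \<in> A - A1" "A1 \<subseteq> A"
    using xy unfolding A1_def by auto
  ultimately show ?thesis
    by (intro that[of A1 "A - A1"]) blast+
qed

lemma edge_boundary_Un_separated:
  assumes "A1 \<inter> A2 = {}" "\<forall>x\<in>A1. \<forall>y\<in>A2. l1dist x y \<noteq> 1"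
  shows "edge_boundary (grid_E n) (A1 \<union> A2) = edge_boundary (grid_E n) A1 \<union> edge_boundary (grid_E n) A2"
    and "edge_boundary (grid_E n) A1 \<inter> edge_boundary (grid_E n) A2 = {}"
proof -
  have "l1dist (fst e) (snd e) = 1" "l1dist (snd e) (fst e) = 1" if "e \<in> grid_E n" for e
    using l1dist_grid_E[OF that] l1dist_commute by auto
  then show "edge_boundary (grid_E n) (A1 \<union> A2) = edge_boundary (grid_E n) A1 \<union> edge_boundary (grid_E n) A2"
    and "edge_boundary (grid_E n) A1 \<inter> edge_boundary (grid_E n) A2 = {}"
    unfolding edge_boundary_def using assms by blast+
qed

lemma card_edge_boundary_Un_separated:
  assumes "A1 \<inter> A2 = {}" "\<forall>x\<in>A1. \<forall>y\<in>A2. l1dist x y \<noteq> 1"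
  shows "card (edge_boundary (grid_E n) (A1 \<union> A2))
           = card (edge_boundary (grid_E n) A1) + card (edge_boundary (grid_E n) A2)"
  using edge_boundary_Un_separated[OF assms] finite_edge_boundary[OF finite_grid_E]
  by (simp add: card_Un_disjoint)

lemma finite_l1dist_set:
  assumes "finite X"
  shows "finite {l1dist u v |u v. u \<in> X \<and> v \<in> X}"
proof -
  have "{l1dist u v |u v. u \<in> X \<and> v \<in> X} = case_prod l1dist ` (X \<times> X)" by auto
  then show ?thesis using assms by simp
qed

lemma l1diam_le:
  assumes "finite X" "\<And>u v. u \<in> X \<Longrightarrow> v \<in> X \<Longrightarrow> l1dist u v \<le> c" "0 \<le> c"
  shows "l1diam X \<le> c"
proof (cases "X = {}")
  case False
  have "finite {l1dist u v |u v. u \<in> X \<and> v \<in> X}"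
    using assms(1) by (rule finite_l1dist_set)
  moreover have "{l1dist u v |u v. u \<in> X \<and> v \<in> X} \<noteq> {}" using False by blast
  ultimately show ?thesis
    using False assms(2) unfolding l1diam_def by auto
qed (use assms(3) l1diam_def in simp)

lemma l1dist_le_l1diam:
  assumes "finite X" "u \<in> X" "v \<in> X"
  shows "l1dist u v \<le> l1diam X"
proof -
  have "finite {l1dist u v |u v. u \<in> X \<and> v \<in> X}"
    using assms(1) by (rule finite_l1dist_set)
  moreover have "l1dist u v \<in> {l1dist u v |u v. u \<in> X \<and> v \<in> X}" using assms by blast
  ultimately show ?thesis
    using assms unfolding l1diam_def by (auto intro: Max_ge)
qed

lemma l1diam_nonneg:
  assumes "finite X"
  shows "0 \<le> l1diam X"
proof (cases "X = {}")
  case False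
  then obtain u where "u \<in> X" by blast
  then show ?thesis using l1dist_le_l1diam[OF assms, of u u] by (simp add: l1dist_def)
qed (simp add: l1diam_def)

lemma l1diam_grid_V_le:
  assumes "X \<subseteq> grid_V n"
  shows "l1diam X \<le> 2 * 2^n"
proof (rule l1diam_le)
  show "finite X" using assms finite_grid_V finite_subset by blast
  fix u v assume "u \<in> X" "v \<in> X"
  then have "u \<in> grid_V n" "v \<in> grid_V n" using assms by auto
  then have "\<bar>fst u - fst v\<bar> + \<bar>snd u - snd v\<bar> \<le> 2 * 2^n"
    by (cases u, cases v) (auto simp: mem_grid_V_iff)
  then show "l1dist u v \<le> 2 * 2^n"
    unfolding l1dist_def by (metis of_int_le_iff of_int_mult of_int_numeral of_int_power)
qed simp

section \<open>Isoperimetry in the grid\<close>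

definition row_crossed :: "nat \<Rightarrow> vtx set \<Rightarrow> int \<Rightarrow> int \<Rightarrow> int \<Rightarrow> bool" where
  "row_crossed n A lo hi y \<longleftrightarrow>
     (\<exists>x. lo \<le> x \<and> x < hi \<and> ((x, y), (x + 1, y)) \<in> edge_boundary (grid_E n) A)"

definition column_crossed :: "nat \<Rightarrow> vtx set \<Rightarrow> int \<Rightarrow> int \<Rightarrow> int \<Rightarrow> bool" where
  "column_crossed n A lo hi x \<longleftrightarrow>
     (\<exists>y. lo \<le> y \<and> y < hi \<and> ((x, y), (x, y + 1)) \<in> edge_boundary (grid_E n) A)"

lemma same_side_on_uncrossed_row:
  assumes "\<not> row_crossed n A lo hi y" "(x, y) \<in> grid_V n" "(x', y) \<in> grid_V n"
    "x \<in> {lo..hi}" "x' \<in> {lo..hi}"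
  shows "(x, y) \<in> A \<longleftrightarrow> (x', y) \<in> A"
proof (rule ccontr)
  assume "((x, y) \<in> A) \<noteq> ((x', y) \<in> A)"
  then obtain z where "min x x' \<le> z" "z < max x x'" "((z, y), (z + 1, y)) \<in> edge_boundary (grid_E n) A"
    using boundary_edge_in_row[OF assms(2,3)] by blast
  moreover have "lo \<le> min x x'" "max x x' \<le> hi" using assms(4,5) by auto
  ultimately have "row_crossed n A lo hi y"
    unfolding row_crossed_def by (intro exI[of _ z]) (auto simp: min_def max_def)
  with assms(1) show False ..
qed

lemma same_side_on_uncrossed_column:
  assumes "\<not> column_crossed n A lo hi x" "(x, y) \<in> grid_V n" "(x, y') \<in> grid_V n"
    "y \<in> {lo..hi}" "y' \<in> {lo..hi}"
  shows "(x, y) \<in> A \<longleftrightarrow> (x, y') \<in> A"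
proof (rule ccontr)
  assume "((x, y) \<in> A) \<noteq> ((x, y') \<in> A)"
  then obtain z where "min y y' \<le> z" "z < max y y'" "((x, z), (x, z + 1)) \<in> edge_boundary (grid_E n) A"
    using boundary_edge_in_column[OF assms(2,3)] by blast
  moreover have "lo \<le> min y y'" "max y y' \<le> hi" using assms(4,5) by auto
  ultimately have "column_crossed n A lo hi x"
    unfolding column_crossed_def by (intro exI[of _ z]) (auto simp: min_def max_def)
  with assms(1) show False ..
qed

lemma card_crossed_rows_le:
  assumes "finite Y"
  shows "card {y \<in> Y. row_crossed n A lo hi y}
    \<le> card (edge_boundary (grid_E n) A \<inter> {((x, y), (x + 1, y)) |x y. lo \<le> x \<and> x < hi \<and> y \<in> Y})"
    (is "card ?R \<le> card ?H")
proof -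
  have "?R \<subseteq> (\<lambda>e. snd (fst e)) ` ?H"
  proof
    fix y assume "y \<in> ?R"
    then obtain x where "lo \<le> x" "x < hi" "y \<in> Y" "((x, y), (x + 1, y)) \<in> edge_boundary (grid_E n) A"
      unfolding row_crossed_def by blast
    then show "y \<in> (\<lambda>e. snd (fst e)) ` ?H" by (intro image_eqI[of _ _ "((x, y), (x + 1, y))"]) auto
  qed
  then have "card ?R \<le> card ((\<lambda>e. snd (fst e)) ` ?H)"
    using finite_edge_boundary[OF finite_grid_E] by (intro card_mono) auto
  also have "\<dots> \<le> card ?H"
    using finite_edge_boundary[OF finite_grid_E] by (intro card_image_le) auto
  finally show ?thesis .
qed

lemma card_crossed_columns_le:
  assumes "finite X"
  shows "card {x \<in> X. column_crossed n A lo hi x}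
    \<le> card (edge_boundary (grid_E n) A \<inter> {((x, y), (x, y + 1)) |x y. lo \<le> y \<and> y < hi \<and> x \<in> X})"
    (is "card ?C \<le> card ?W")
proof -
  have "?C \<subseteq> (\<lambda>e. fst (fst e)) ` ?W"
  proof
    fix x assume "x \<in> ?C"
    then obtain y where "lo \<le> y" "y < hi" "x \<in> X" "((x, y), (x, y + 1)) \<in> edge_boundary (grid_E n) A"
      unfolding column_crossed_def by blast
    then show "x \<in> (\<lambda>e. fst (fst e)) ` ?W" by (intro image_eqI[of _ _ "((x, y), (x, y + 1))"]) auto
  qed
  then have "card ?C \<le> card ((\<lambda>e. fst (fst e)) ` ?W)"
    using finite_edge_boundary[OF finite_grid_E] by (intro card_mono) auto
  also have "\<dots> \<le> card ?W"
    using finite_edge_boundary[OF finite_grid_E] by (intro card_image_le) auto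
  finally show ?thesis .
qed

lemma card_crossed_lines_le:
  "card {y \<in> {0..2^n}. row_crossed n A 0 (2^n) y} + card {x \<in> {0..2^n}. column_crossed n A 0 (2^n) x}
     \<le> card (edge_boundary (grid_E n) A)"
proof -
  define N :: int where "N = 2^n"
  let ?B = "edge_boundary (grid_E n) A"
  let ?H = "?B \<inter> {((x, y), (x + 1, y)) |x y. 0 \<le> x \<and> x < N \<and> y \<in> {0..N}}"
  let ?W = "?B \<inter> {((x, y), (x, y + 1)) |x y. 0 \<le> y \<and> y < N \<and> x \<in> {0..N}}"
  have fin: "finite ?H" "finite ?W" "finite ?B"
    using finite_edge_boundary[OF finite_grid_E] by auto
  have "?H \<inter> ?W = {}" by auto
  then have "card ?H + card ?W = card (?H \<union> ?W)"
    using fin by (simp add: card_Un_disjoint)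
  also have "\<dots> \<le> card ?B"
    using fin by (intro card_mono) auto
  finally have "card ?H + card ?W \<le> card ?B" .
  then show ?thesis
    using card_crossed_rows_le[OF finite_atLeastAtMost_int, of 0 N n A 0 N]
      card_crossed_columns_le[OF finite_atLeastAtMost_int, of 0 N n A 0 N]
    unfolding N_def by linarith
qed

lemma induces_connected_meets_row:
  assumes "induces_connected X" "a \<in> X" "c \<in> X" "y \<in> {min (snd a) (snd c)..max (snd a) (snd c)}"
  shows "\<exists>w\<in>X. snd w = y"
proof -
  have "\<exists>w\<in>X. snd w = y" if uv: "u \<in> X" "v \<in> X" "snd u < y" "y \<le> snd v" for u v
  proof -
    obtain w w' where w: "w' \<in> X" "l1dist w w' = 1" "snd w < y" "\<not> snd w' < y"
      using induces_connected_crossing[OF assms(1) uv(1,2), of "\<lambda>w. snd w < y"] uv(3,4) by auto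
    then have "snd w' = y" by (cases w, cases w') (auto simp: l1dist_eq_1_iff)
    with w(1) show ?thesis by blast
  qed
  from this[of a c] this[of c a] assms(2-4) show ?thesis
    by (cases "snd a = y \<or> snd c = y") (auto simp: min_def max_def split: if_splits)
qed

lemma induces_connected_meets_column:
  assumes "induces_connected X" "a \<in> X" "c \<in> X" "x \<in> {min (fst a) (fst c)..max (fst a) (fst c)}"
  shows "\<exists>w\<in>X. fst w = x"
proof -
  have "\<exists>w\<in>X. fst w = x" if uv: "u \<in> X" "v \<in> X" "fst u < x" "x \<le> fst v" for u v
  proof -
    obtain w w' where w: "w' \<in> X" "l1dist w w' = 1" "fst w < x" "\<not> fst w' < x"
      using induces_connected_crossing[OF assms(1) uv(1,2), of "\<lambda>w. fst w < x"] uv(3,4) by auto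
    then have "fst w' = x" by (cases w, cases w') (auto simp: l1dist_eq_1_iff)
    with w(1) show ?thesis by blast
  qed
  from this[of a c] this[of c a] assms(2-4) show ?thesis
    by (cases "fst a = x \<or> fst c = x") (auto simp: min_def max_def split: if_splits)
qed

lemma card_crossed_rows_ge:
  assumes "X \<subseteq> grid_V n" "induces_connected X" "x0 \<in> {0..2^n}" "\<forall>y. (x0, y) \<notin> X"
    and "a \<in> X" "c \<in> X"
  shows "\<bar>snd a - snd c\<bar> + 1 \<le> int (card {y \<in> {0..2^n}. row_crossed n X 0 (2^n) y})"
proof -
  let ?I = "{min (snd a) (snd c)..max (snd a) (snd c)}"
  have "?I \<subseteq> {y \<in> {0..2^n}. row_crossed n X 0 (2^n) y}"
  proof
    fix y assume "y \<in> ?I"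
    then obtain x where xy: "(x, y) \<in> X"
      using induces_connected_meets_row[OF assms(2,5,6)] by fastforce
    then have in_grid: "(x, y) \<in> grid_V n" "(x0, y) \<in> grid_V n"
      using assms(1,3) by (auto simp: mem_grid_V_iff)
    then obtain z where z: "min x x0 \<le> z" "z < max x x0"
        "((z, y), (z + 1, y)) \<in> edge_boundary (grid_E n) X"
      using boundary_edge_in_row[OF in_grid, of X] xy assms(4) by blast
    moreover have "0 \<le> z" "z < 2^n" "y \<in> {0..2^n}"
      using in_grid z(1,2) by (auto simp: mem_grid_V_iff)
    ultimately show "y \<in> {y \<in> {0..2^n}. row_crossed n X 0 (2^n) y}"
      unfolding row_crossed_def by blast
  qed
  moreover have "finite {y \<in> {0..2^n}. row_crossed n X 0 (2^n) y}"
    by (rule finite_subset[of _ "{0..2^n}"]) auto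
  ultimately have "card ?I \<le> card {y \<in> {0..2^n}. row_crossed n X 0 (2^n) y}"
    by (simp only: card_mono)
  moreover have "int (card ?I) = \<bar>snd a - snd c\<bar> + 1"
    by (simp add: min_def max_def abs_if)
  ultimately show ?thesis by linarith
qed

lemma card_crossed_columns_ge:
  assumes "X \<subseteq> grid_V n" "induces_connected X" "y0 \<in> {0..2^n}" "\<forall>x. (x, y0) \<notin> X"
    and "a \<in> X" "c \<in> X"
  shows "\<bar>fst a - fst c\<bar> + 1 \<le> int (card {x \<in> {0..2^n}. column_crossed n X 0 (2^n) x})"
proof -
  let ?I = "{min (fst a) (fst c)..max (fst a) (fst c)}"
  have "?I \<subseteq> {x \<in> {0..2^n}. column_crossed n X 0 (2^n) x}"
  proof
    fix x assume "x \<in> ?I"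
    then obtain y where xy: "(x, y) \<in> X"
      using induces_connected_meets_column[OF assms(2,5,6)] by fastforce
    then have in_grid: "(x, y) \<in> grid_V n" "(x, y0) \<in> grid_V n"
      using assms(1,3) by (auto simp: mem_grid_V_iff)
    then obtain z where z: "min y y0 \<le> z" "z < max y y0"
        "((x, z), (x, z + 1)) \<in> edge_boundary (grid_E n) X"
      using boundary_edge_in_column[OF in_grid, of X] xy assms(4) by blast
    moreover have "0 \<le> z" "z < 2^n" "x \<in> {0..2^n}"
      using in_grid z(1,2) by (auto simp: mem_grid_V_iff)
    ultimately show "x \<in> {x \<in> {0..2^n}. column_crossed n X 0 (2^n) x}"
      unfolding column_crossed_def by blast
  qed
  moreover have "finite {x \<in> {0..2^n}. column_crossed n X 0 (2^n) x}"
    by (rule finite_subset[of _ "{0..2^n}"]) auto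
  ultimately have "card ?I \<le> card {x \<in> {0..2^n}. column_crossed n X 0 (2^n) x}"
    by (simp only: card_mono)
  moreover have "int (card ?I) = \<bar>fst a - fst c\<bar> + 1"
    by (simp add: min_def max_def abs_if)
  ultimately show ?thesis by linarith
qed

text \<open>Since the uncrossed row y0 and column x0 meet at a point outside X, they are disjoint from X,
  so every row and every column that X meets is crossed.\<close>

lemma l1diam_le_card_edge_boundary:
  assumes X: "X \<subseteq> grid_V n" "induces_connected X"
    and clean: "x0 \<in> {0..2^n}" "y0 \<in> {0..2^n}"
      "\<not> column_crossed n X 0 (2^n) x0" "\<not> row_crossed n X 0 (2^n) y0"
    and out: "(x0, y0) \<notin> X"
  shows "l1diam X \<le> card (edge_boundary (grid_E n) X)"
proof (rule l1diam_le)
  show "finite X" using X(1) finite_grid_V finite_subset by blast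
  have column_x0: "(x0, y) \<notin> X" for y
  proof (cases "y \<in> {0..2^n}")
    case True
    then have "(x0, y) \<in> grid_V n" "(x0, y0) \<in> grid_V n" using clean by (auto simp: mem_grid_V_iff)
    from same_side_on_uncrossed_column[OF clean(3) this] True clean(2) out show ?thesis by simp
  qed (use X(1) in \<open>auto simp: mem_grid_V_iff\<close>)
  have row_y0: "(x, y0) \<notin> X" for x
  proof (cases "x \<in> {0..2^n}")
    case True
    then have "(x, y0) \<in> grid_V n" "(x0, y0) \<in> grid_V n" using clean by (auto simp: mem_grid_V_iff)
    from same_side_on_uncrossed_row[OF clean(4) this] True clean(1) out show ?thesis by simp
  qed (use X(1) in \<open>auto simp: mem_grid_V_iff\<close>)
  fix a c assume "a \<in> X" "c \<in> X"
  then have "\<bar>snd a - snd c\<bar> + 1 \<le> int (card {y \<in> {0..2^n}. row_crossed n X 0 (2^n) y})"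
    and "\<bar>fst a - fst c\<bar> + 1 \<le> int (card {x \<in> {0..2^n}. column_crossed n X 0 (2^n) x})"
    using card_crossed_rows_ge[OF X clean(1)] card_crossed_columns_ge[OF X clean(2)] column_x0 row_y0
    by blast+
  then have "\<bar>fst a - fst c\<bar> + \<bar>snd a - snd c\<bar> + 2
      \<le> int (card {y \<in> {0..2^n}. row_crossed n X 0 (2^n) y})
        + int (card {x \<in> {0..2^n}. column_crossed n X 0 (2^n) x})"
    by linarith
  also have "\<dots> \<le> int (card (edge_boundary (grid_E n) X))"
    using card_crossed_lines_le[of n X] by linarith
  finally show "l1dist a c \<le> card (edge_boundary (grid_E n) X)"
    unfolding l1dist_def by linarith
qed simp

lemma exists_uncrossed_row:
  assumes "card (edge_boundary (grid_E n) A) \<le> 2^n"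
  obtains y0 where "y0 \<in> {0..2^n}" "\<not> row_crossed n A 0 (2^n) y0"
proof -
  let ?C = "{z \<in> {0..(2::int)^n}. row_crossed n A 0 (2^n) z}"
  have "card {0..(2::int)^n} = 2^n + 1"
    by (simp add: nat_add_distrib nat_power_eq)
  then have "card ?C < card {0..(2::int)^n}"
    using card_crossed_lines_le[of n A] assms by linarith
  then have "\<not> {0..(2::int)^n} \<subseteq> ?C"
    using card_mono[of ?C "{0..(2::int)^n}"] by (auto simp del: atLeastAtMost_iff)
  then show ?thesis using that by blast
qed

lemma exists_uncrossed_column:
  assumes "card (edge_boundary (grid_E n) A) \<le> 2^n"
  obtains x0 where "x0 \<in> {0..2^n}" "\<not> column_crossed n A 0 (2^n) x0"
proof -
  let ?C = "{z \<in> {0..(2::int)^n}. column_crossed n A 0 (2^n) z}"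
  have "card {0..(2::int)^n} = 2^n + 1"
    by (simp add: nat_add_distrib nat_power_eq)
  then have "card ?C < card {0..(2::int)^n}"
    using card_crossed_lines_le[of n A] assms by linarith
  then have "\<not> {0..(2::int)^n} \<subseteq> ?C"
    using card_mono[of ?C "{0..(2::int)^n}"] by (auto simp del: atLeastAtMost_iff)
  then show ?thesis using that by blast
qed

theorem grid_isoperimetric:
  assumes A: "A \<subseteq> grid_V n" "induces_connected A" "induces_connected (grid_V n - A)"
    and few: "card (edge_boundary (grid_E n) A) \<le> 2^n"
  shows "l1diam A \<le> card (edge_boundary (grid_E n) A)
    \<or> l1diam (grid_V n - A) \<le> card (edge_boundary (grid_E n) A)"
proof -
  obtain y0 where y0: "y0 \<in> {0..2^n}" "\<not> row_crossed n A 0 (2^n) y0"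
    using exists_uncrossed_row[OF few] .
  obtain x0 where x0: "x0 \<in> {0..2^n}" "\<not> column_crossed n A 0 (2^n) x0"
    using exists_uncrossed_column[OF few] .
  have complement: "edge_boundary (grid_E n) (grid_V n - A) = edge_boundary (grid_E n) A"
    by (rule edge_boundary_Diff[OF grid_E_subset])
  show ?thesis
  proof (cases "(x0, y0) \<in> A")
    case False
    then show ?thesis using l1diam_le_card_edge_boundary[OF A(1,2) x0(1) y0(1) x0(2) y0(2)] by simp
  next
    case True
    then have "l1diam (grid_V n - A) \<le> card (edge_boundary (grid_E n) (grid_V n - A))"
      using l1diam_le_card_edge_boundary[of "grid_V n - A" n x0 y0] A(3) x0 y0
      by (simp add: row_crossed_def column_crossed_def complement)
    then show ?thesis by (simp add: complement)
  qed
qed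

lemma min_l1diam_sides_le:
  assumes A: "A \<subseteq> grid_V n" "induces_connected A" "induces_connected (grid_V n - A)"
    and "x \<in> A" "y \<in> grid_V n - A"
  shows "min (l1diam A) (l1diam (grid_V n - A)) + 1 \<le> 2 * card (edge_boundary (grid_E n) A)"
proof -
  let ?b = "card (edge_boundary (grid_E n) A)"
  have "1 \<le> ?b" using card_edge_boundary_pos[OF assms(4,5) A(1)] by simp
  show ?thesis
  proof (cases "?b \<le> 2^n")
    case True
    then show ?thesis using grid_isoperimetric[OF A True] \<open>1 \<le> ?b\<close> by linarith
  next
    case False
    then have "real (2^n + 1) \<le> real ?b" by linarith
    then have "2^n + 1 \<le> real ?b" by simp
    then show ?thesis using l1diam_grid_V_le[OF A(1)] by linarith
  qed
qed

definition square :: "vtx \<Rightarrow> int \<Rightarrow> vtx set" where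
  "square p R = {v. \<bar>fst v - fst p\<bar> \<le> R \<and> \<bar>snd v - snd p\<bar> \<le> R}"

lemma l1dist_le_of_mem_square:
  "u \<in> square p R \<Longrightarrow> v \<in> square p R \<Longrightarrow> l1dist u v \<le> 4 * R"
  unfolding square_def l1dist_def by (simp add: abs_if split: if_splits; linarith)

lemma l1dist_le_of_square_inter:
  "v \<in> square p R \<Longrightarrow> v \<in> square p' R \<Longrightarrow> l1dist p p' \<le> 4 * R"
  unfolding square_def l1dist_def by (simp add: abs_if split: if_splits; linarith)

lemma l1diam_le_of_subset_square:
  assumes "X \<subseteq> square p R" "finite X" "0 \<le> R"
  shows "l1diam X \<le> 4 * R"
proof (rule l1diam_le)
  fix u v assume "u \<in> X" "v \<in> X"
  with assms(1) show "l1dist u v \<le> 4 * R" using l1dist_le_of_mem_square by blast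
qed (use assms in auto)

definition rectangle_frame :: "int \<Rightarrow> int \<Rightarrow> int \<Rightarrow> int \<Rightarrow> vtx set" where
  "rectangle_frame xl xr yb yt = {xl, xr} \<times> {yb<..<yt} \<union> {xl<..<xr} \<times> {yb, yt}"

lemma induces_connected_subset_open_rectangle:
  assumes D: "induces_connected D" "s \<in> D" "s \<in> {xl<..<xr} \<times> {yb<..<yt}"
    and avoids_frame: "D \<inter> rectangle_frame xl xr yb yt = {}"
  shows "D \<subseteq> {xl<..<xr} \<times> {yb<..<yt}"
proof (rule ccontr)
  assume "\<not> ?thesis"
  then obtain z where z: "z \<in> D" "z \<notin> {xl<..<xr} \<times> {yb<..<yt}" by blast
  then obtain w w' where "w' \<in> D" "l1dist w w' = 1"
      "w \<in> {xl<..<xr} \<times> {yb<..<yt}" "w' \<notin> {xl<..<xr} \<times> {yb<..<yt}"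
    using induces_connected_crossing[OF D(1,2) z(1), of "\<lambda>w. w \<in> {xl<..<xr} \<times> {yb<..<yt}"] D(3) z(2) by blast
  then have "w' \<in> D \<inter> rectangle_frame xl xr yb yt"
    by (cases w, cases w') (auto simp: l1dist_eq_1_iff rectangle_frame_def)
  with avoids_frame show False by blast
qed

lemma frame_on_one_side:
  assumes "xl \<le> xr" "yb \<le> yt"
    and rows: "\<And>y. y \<in> {yb, yt} \<Longrightarrow> y \<in> {0..2^n} \<Longrightarrow> \<not> row_crossed n A xlo xhi y"
    and columns: "\<And>x. x \<in> {xl, xr} \<Longrightarrow> x \<in> {0..2^n} \<Longrightarrow> \<not> column_crossed n A ylo yhi x"
    and corner: "xc \<in> {xl, xr}" "xc \<in> {0..2^n}" "yc \<in> {yb, yt}" "yc \<in> {0..2^n}"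
    and ranges: "{xl..xr} \<inter> {0..2^n} \<subseteq> {xlo..xhi}" "{yb..yt} \<inter> {0..2^n} \<subseteq> {ylo..yhi}"
    and w: "w \<in> rectangle_frame xl xr yb yt \<inter> grid_V n"
  shows "w \<in> A \<longleftrightarrow> (xc, yc) \<in> A"
proof -
  have along_row: "(x, y) \<in> A \<longleftrightarrow> (xc, y) \<in> A"
    if "y \<in> {yb, yt}" "y \<in> {0..2^n}" "x \<in> {xl..xr}" "x \<in> {0..2^n}" for x y
    using same_side_on_uncrossed_row[OF rows[OF that(1,2)], of x xc] that corner(1,2) ranges(1) assms(1)
    by (auto simp: mem_grid_V_iff)
  have along_column: "(x, y) \<in> A \<longleftrightarrow> (x, yc) \<in> A"
    if "x \<in> {xl, xr}" "x \<in> {0..2^n}" "y \<in> {yb..yt}" "y \<in> {0..2^n}" for x y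
    using same_side_on_uncrossed_column[OF columns[OF that(1,2)], of y yc] that corner(3,4) ranges(2) assms(2)
    by (auto simp: mem_grid_V_iff)
  obtain a b where ab: "w = (a, b)" by fastforce
  from w consider "a \<in> {xl, xr}" "b \<in> {yb<..<yt}" "(a, b) \<in> grid_V n"
    | "a \<in> {xl<..<xr}" "b \<in> {yb, yt}" "(a, b) \<in> grid_V n"
    unfolding ab rectangle_frame_def by blast
  then show ?thesis
  proof cases
    case 1
    then show ?thesis
      using along_column[of a b] along_row[of yc a] corner assms(1) unfolding ab
      by (auto simp: mem_grid_V_iff)
  next
    case 2
    then show ?thesis
      using along_row[of b a] along_column[of xc b] corner assms(2) unfolding ab
      by (auto simp: mem_grid_V_iff)
  qed
qed

lemma exists_uncrossed_row_near:
  assumes few: "card (edge_boundary (grid_E n) A \<inter> square p R \<times> square p R) < card Y"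
    and Y: "Y \<subseteq> {snd p - R..snd p + R}"
  obtains y where "y \<in> Y" "\<not> row_crossed n A (fst p - R) (fst p + R) y"
proof -
  have "finite Y" using Y finite_subset by blast
  then have "card {y \<in> Y. row_crossed n A (fst p - R) (fst p + R) y}
      \<le> card (edge_boundary (grid_E n) A
          \<inter> {((x, y), (x + 1, y)) |x y. fst p - R \<le> x \<and> x < fst p + R \<and> y \<in> Y})"
    by (rule card_crossed_rows_le)
  also have "\<dots> \<le> card (edge_boundary (grid_E n) A \<inter> square p R \<times> square p R)"
    by (rule card_mono) (auto simp: finite_edge_boundary[OF finite_grid_E] square_def abs_le_iff
        dest!: subsetD[OF Y])
  finally have "{y \<in> Y. row_crossed n A (fst p - R) (fst p + R) y} \<noteq> Y"
    using few by auto
  then show ?thesis using that by blast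
qed

lemma exists_uncrossed_column_near:
  assumes few: "card (edge_boundary (grid_E n) A \<inter> square p R \<times> square p R) < card X"
    and X: "X \<subseteq> {fst p - R..fst p + R}"
  obtains x where "x \<in> X" "\<not> column_crossed n A (snd p - R) (snd p + R) x"
proof -
  have "finite X" using X finite_subset by blast
  then have "card {x \<in> X. column_crossed n A (snd p - R) (snd p + R) x}
      \<le> card (edge_boundary (grid_E n) A
          \<inter> {((x, y), (x, y + 1)) |x y. snd p - R \<le> y \<and> y < snd p + R \<and> x \<in> X})"
    by (rule card_crossed_columns_le)
  also have "\<dots> \<le> card (edge_boundary (grid_E n) A \<inter> square p R \<times> square p R)"
    by (rule card_mono) (auto simp: finite_edge_boundary[OF finite_grid_E] square_def abs_le_iff
        dest!: subsetD[OF X])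
  finally have "{x \<in> X. column_crossed n A (snd p - R) (snd p + R) x} \<noteq> X"
    using few by auto
  then show ?thesis using that by blast
qed

text \<open>The values N + 1 and -1 stand for lines beyond the border of the grid, which no grid
  vertex lies on.\<close>

lemma exists_line_above:
  fixes P :: "int \<Rightarrow> bool"
  assumes "1 \<le> r" "\<And>Y. Y \<subseteq> {c - 2*r..c + 2*r} \<Longrightarrow> card Y = nat r \<Longrightarrow> \<exists>y\<in>Y. P y"
  obtains y where "c + r < y \<and> y \<le> c + 2*r \<and> y \<le> N \<and> P y \<or> y = N + 1 \<and> N \<le> c + 2*r"
proof (cases "c + 2*r < N")
  case True
  have "{c + r + 1..c + 2*r} \<subseteq> {c - 2*r..c + 2*r}" "card {c + r + 1..c + 2*r} = nat r"
    using assms(1) by auto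
  then obtain y where "y \<in> {c + r + 1..c + 2*r}" "P y" using assms(2) by blast
  with True show ?thesis by (intro that[of y]) auto
qed (use that in auto)

lemma exists_line_below:
  fixes P :: "int \<Rightarrow> bool"
  assumes "1 \<le> r" "\<And>Y. Y \<subseteq> {c - 2*r..c + 2*r} \<Longrightarrow> card Y = nat r \<Longrightarrow> \<exists>y\<in>Y. P y"
  obtains y where "c - 2*r \<le> y \<and> y < c - r \<and> 0 \<le> y \<and> P y \<or> y = -1 \<and> c - 2*r \<le> 0"
proof (cases "0 < c - 2*r")
  case True
  have "{c - 2*r..c - r - 1} \<subseteq> {c - 2*r..c + 2*r}" "card {c - 2*r..c - r - 1} = nat r"
    using assms(1) by auto
  then obtain y where "y \<in> {c - 2*r..c - r - 1}" "P y" using assms(2) by blast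
  with True show ?thesis by (intro that[of y]) auto
qed (use that in auto)

lemma exists_frame_rows:
  assumes r: "1 \<le> r"
    and few: "card (edge_boundary (grid_E n) A \<inter> square p (2*r) \<times> square p (2*r)) < nat r"
  obtains yb yt where
    "snd p - 2*r \<le> yb \<and> yb < snd p - r \<and> 0 \<le> yb \<and> \<not> row_crossed n A (fst p - 2*r) (fst p + 2*r) yb
      \<or> yb = -1 \<and> snd p - 2*r \<le> 0"
    "snd p + r < yt \<and> yt \<le> snd p + 2*r \<and> yt \<le> N \<and> \<not> row_crossed n A (fst p - 2*r) (fst p + 2*r) yt
      \<or> yt = N + 1 \<and> N \<le> snd p + 2*r"
proof -
  have lines: "\<exists>y\<in>Y. \<not> row_crossed n A (fst p - 2*r) (fst p + 2*r) y"
    if "Y \<subseteq> {snd p - 2*r..snd p + 2*r}" "card Y = nat r" for Y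
    using exists_uncrossed_row_near[of n A p "2*r" Y] few that by auto
  obtain yb where "snd p - 2*r \<le> yb \<and> yb < snd p - r \<and> 0 \<le> yb \<and> \<not> row_crossed n A (fst p - 2*r) (fst p + 2*r) yb
      \<or> yb = -1 \<and> snd p - 2*r \<le> 0"
    using exists_line_below[OF r lines] by blast
  moreover obtain yt where "snd p + r < yt \<and> yt \<le> snd p + 2*r \<and> yt \<le> N \<and> \<not> row_crossed n A (fst p - 2*r) (fst p + 2*r) yt
      \<or> yt = N + 1 \<and> N \<le> snd p + 2*r"
    using exists_line_above[OF r lines] by blast
  ultimately show ?thesis by (rule that)
qed

lemma exists_frame_columns:
  assumes r: "1 \<le> r"
    and few: "card (edge_boundary (grid_E n) A \<inter> square p (2*r) \<times> square p (2*r)) < nat r"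
  obtains xl xr where
    "fst p - 2*r \<le> xl \<and> xl < fst p - r \<and> 0 \<le> xl \<and> \<not> column_crossed n A (snd p - 2*r) (snd p + 2*r) xl
      \<or> xl = -1 \<and> fst p - 2*r \<le> 0"
    "fst p + r < xr \<and> xr \<le> fst p + 2*r \<and> xr \<le> N \<and> \<not> column_crossed n A (snd p - 2*r) (snd p + 2*r) xr
      \<or> xr = N + 1 \<and> N \<le> fst p + 2*r"
proof -
  have lines: "\<exists>x\<in>X. \<not> column_crossed n A (snd p - 2*r) (snd p + 2*r) x"
    if "X \<subseteq> {fst p - 2*r..fst p + 2*r}" "card X = nat r" for X
    using exists_uncrossed_column_near[of n A p "2*r" X] few that by auto
  obtain xl where "fst p - 2*r \<le> xl \<and> xl < fst p - r \<and> 0 \<le> xl \<and> \<not> column_crossed n A (snd p - 2*r) (snd p + 2*r) xl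
      \<or> xl = -1 \<and> fst p - 2*r \<le> 0"
    using exists_line_below[OF r lines] by blast
  moreover obtain xr where "fst p + r < xr \<and> xr \<le> fst p + 2*r \<and> xr \<le> N \<and> \<not> column_crossed n A (snd p - 2*r) (snd p + 2*r) xr
      \<or> xr = N + 1 \<and> N \<le> fst p + 2*r"
    using exists_line_above[OF r lines] by blast
  ultimately show ?thesis by (rule that)
qed

text \<open>Fewer than r boundary edges near p leave, among the r rows at distance between r and 2r
  above p, one that is not crossed near p, and likewise below, left and right.  These four
  lines bound a rectangle around p whose frame lies on one side of A.\<close>

lemma exists_one_sided_frame:
  assumes pq: "p \<in> grid_V n" "q \<in> grid_V n" "l1dist p q = 1"
    and r: "1 \<le> r" "4 * r < 2^n"
    and few: "card (edge_boundary (grid_E n) A \<inter> square p (2*r) \<times> square p (2*r)) < nat r"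
  obtains xl xr yb yt \<tau> where
    "p \<in> {xl<..<xr} \<times> {yb<..<yt}" "q \<in> {xl<..<xr} \<times> {yb<..<yt}"
    "{xl<..<xr} \<times> {yb<..<yt} \<inter> grid_V n \<subseteq> square p (2*r)"
    "\<forall>w \<in> rectangle_frame xl xr yb yt \<inter> grid_V n. (w \<in> A) = \<tau>"
proof -
  obtain p1 p2 q1 q2 where p: "p = (p1, p2)" and q: "q = (q1, q2)" by fastforce
  define N :: int where "N = 2^n"
  have pV: "0 \<le> p1" "p1 \<le> N" "0 \<le> p2" "p2 \<le> N" and qV: "0 \<le> q1" "q1 \<le> N" "0 \<le> q2" "q2 \<le> N"
    using pq(1,2) unfolding p q N_def mem_grid_V_iff by auto
  have pq_adj: "\<bar>p1 - q1\<bar> + \<bar>p2 - q2\<bar> = 1"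
    using pq(3) unfolding p q l1dist_def by simp
  have rN: "4 * r < N" using r(2) unfolding N_def by simp
  obtain yb yt where
    yb: "p2 - 2*r \<le> yb \<and> yb < p2 - r \<and> 0 \<le> yb \<and> \<not> row_crossed n A (p1 - 2*r) (p1 + 2*r) yb
      \<or> yb = -1 \<and> p2 - 2*r \<le> 0" and
    yt: "p2 + r < yt \<and> yt \<le> p2 + 2*r \<and> yt \<le> N \<and> \<not> row_crossed n A (p1 - 2*r) (p1 + 2*r) yt
      \<or> yt = N + 1 \<and> N \<le> p2 + 2*r"
    using exists_frame_rows[OF r(1) few, of N] unfolding p by auto
  obtain xl xr where
    xl: "p1 - 2*r \<le> xl \<and> xl < p1 - r \<and> 0 \<le> xl \<and> \<not> column_crossed n A (p2 - 2*r) (p2 + 2*r) xl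
      \<or> xl = -1 \<and> p1 - 2*r \<le> 0" and
    xr: "p1 + r < xr \<and> xr \<le> p1 + 2*r \<and> xr \<le> N \<and> \<not> column_crossed n A (p2 - 2*r) (p2 + 2*r) xr
      \<or> xr = N + 1 \<and> N \<le> p1 + 2*r"
    using exists_frame_columns[OF r(1) few, of N] unfolding p by auto
  have "xl \<in> {0..N} \<or> xr \<in> {0..N}" "yb \<in> {0..N} \<or> yt \<in> {0..N}"
    using xl xr yb yt rN pV by auto
  then obtain xc yc where xc: "xc \<in> {xl, xr}" "xc \<in> {0..N}" and yc: "yc \<in> {yb, yt}" "yc \<in> {0..N}"
    by blast
  show ?thesis
  proof (rule that[of xl xr yb yt "(xc, yc) \<in> A"])
    show "p \<in> {xl<..<xr} \<times> {yb<..<yt}" "q \<in> {xl<..<xr} \<times> {yb<..<yt}"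
      using xl xr yb yt pV qV pq_adj r(1) unfolding p q by auto
    show "{xl<..<xr} \<times> {yb<..<yt} \<inter> grid_V n \<subseteq> square p (2*r)"
      using xl xr yb yt unfolding p square_def N_def by (auto simp: mem_grid_V_iff)
    show "\<forall>w \<in> rectangle_frame xl xr yb yt \<inter> grid_V n. (w \<in> A) = ((xc, yc) \<in> A)"
    proof
      fix w assume w: "w \<in> rectangle_frame xl xr yb yt \<inter> grid_V n"
      show "(w \<in> A) = ((xc, yc) \<in> A)"
      proof (rule frame_on_one_side[where xlo = "p1 - 2*r" and xhi = "p1 + 2*r"
            and ylo = "p2 - 2*r" and yhi = "p2 + 2*r"])
        show "xl \<le> xr" "yb \<le> yt" using xl xr yb yt pV by auto
        show "\<not> row_crossed n A (p1 - 2*r) (p1 + 2*r) y" if "y \<in> {yb, yt}" "y \<in> {0..2^n}" for y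
          using that yb yt unfolding N_def by auto
        show "\<not> column_crossed n A (p2 - 2*r) (p2 + 2*r) x" if "x \<in> {xl, xr}" "x \<in> {0..2^n}" for x
          using that xl xr unfolding N_def by auto
        show "xc \<in> {xl, xr}" "xc \<in> {0..2^n}" "yc \<in> {yb, yt}" "yc \<in> {0..2^n}"
          using xc yc unfolding N_def by auto
        show "{xl..xr} \<inter> {0..2^n} \<subseteq> {p1 - 2*r..p1 + 2*r}"
          using xl xr unfolding N_def by auto
        show "{yb..yt} \<inter> {0..2^n} \<subseteq> {p2 - 2*r..p2 + 2*r}"
          using yb yt unfolding N_def by auto
        show "w \<in> rectangle_frame xl xr yb yt \<inter> grid_V n" by (rule w)
      qed
    qed
  qed
qed

theorem subset_square_of_few_boundary_edges:
  assumes A: "A \<subseteq> grid_V n" "induces_connected A" "induces_connected (grid_V n - A)"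
    and pq: "p \<in> grid_V n" "q \<in> grid_V n" "l1dist p q = 1" "(p \<in> A) \<noteq> (q \<in> A)"
    and r: "1 \<le> r" "4 * r < 2^n"
    and few: "card (edge_boundary (grid_E n) A \<inter> square p (2*r) \<times> square p (2*r)) < nat r"
  shows "A \<subseteq> square p (2*r) \<or> grid_V n - A \<subseteq> square p (2*r)"
proof -
  obtain xl xr yb yt \<tau> where inside: "p \<in> {xl<..<xr} \<times> {yb<..<yt}" "q \<in> {xl<..<xr} \<times> {yb<..<yt}"
    and small: "{xl<..<xr} \<times> {yb<..<yt} \<inter> grid_V n \<subseteq> square p (2*r)"
    and frame: "\<forall>w \<in> rectangle_frame xl xr yb yt \<inter> grid_V n. (w \<in> A) = \<tau>"
    using exists_one_sided_frame[OF pq(1-3) r few] by blast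
  define D where "D = (if \<tau> then grid_V n - A else A)"
  have D: "induces_connected D" "D \<subseteq> grid_V n"
    using A by (auto simp: D_def)
  have "D \<inter> rectangle_frame xl xr yb yt = {}"
    using frame D(2) by (auto simp: D_def)
  moreover have "p \<in> D \<or> q \<in> D"
    using pq by (auto simp: D_def)
  ultimately have "D \<subseteq> {xl<..<xr} \<times> {yb<..<yt}"
    using induces_connected_subset_open_rectangle[OF D(1)] inside by blast
  with small D(2) have "D \<subseteq> square p (2*r)" by blast
  then show ?thesis by (auto simp: D_def split: if_splits)
qed

lemma card_boundary_vertices_le:
  assumes "P \<subseteq> grid_V n" "\<And>p. p \<in> P \<Longrightarrow> \<exists>q\<in>grid_V n. l1dist p q = 1 \<and> (p \<in> A) \<noteq> (q \<in> A)"
  shows "card P \<le> 2 * card (edge_boundary (grid_E n) A)"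
proof -
  let ?B = "edge_boundary (grid_E n) A"
  have fin: "finite ?B" by (rule finite_edge_boundary[OF finite_grid_E])
  have "P \<subseteq> fst ` ?B \<union> snd ` ?B"
  proof
    fix p assume "p \<in> P"
    then obtain q where "p \<in> grid_V n" "q \<in> grid_V n" "l1dist p q = 1" "(p \<in> A) \<noteq> (q \<in> A)"
      using assms by blast
    from adjacent_mem_edge_boundary[OF this] show "p \<in> fst ` ?B \<union> snd ` ?B" by force
  qed
  then have "card P \<le> card (fst ` ?B \<union> snd ` ?B)"
    using fin by (intro card_mono) auto
  also have "\<dots> \<le> card (fst ` ?B) + card (snd ` ?B)" by (rule card_Un_le)
  also have "\<dots> \<le> card ?B + card ?B" using fin by (intro add_mono card_image_le)
  finally show ?thesis by simp
qed

lemma card_edge_boundary_near_ge: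
  assumes A: "A \<subseteq> grid_V n" "induces_connected A" "induces_connected (grid_V n - A)"
    and pq: "p \<in> grid_V n" "q \<in> grid_V n" "l1dist p q = 1" "(p \<in> A) \<noteq> (q \<in> A)"
    and r: "1 \<le> r" "8 * r < l1diam A" "8 * r < l1diam (grid_V n - A)"
  shows "nat r \<le> card (edge_boundary (grid_E n) A \<inter> square p (2*r) \<times> square p (2*r))"
proof (rule ccontr)
  assume few: "\<not> ?thesis"
  have "real_of_int (4 * r) < real_of_int (2^n)"
    using l1diam_grid_V_le[OF A(1)] r(2) by simp
  then have "4 * r < 2^n" by (simp only: of_int_less_iff)
  then have "A \<subseteq> square p (2*r) \<or> grid_V n - A \<subseteq> square p (2*r)"
    using subset_square_of_few_boundary_edges[OF A pq r(1)] few by simp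
  moreover have "finite A" "finite (grid_V n - A)"
    using finite_subset[OF A(1) finite_grid_V] finite_grid_V by auto
  ultimately have "l1diam A \<le> 4 * (2 * r) \<or> l1diam (grid_V n - A) \<le> 4 * (2 * r)"
    using l1diam_le_of_subset_square[of _ p "2 * r"] r(1) by auto
  then show False using r(2,3) by linarith
qed

lemma card_separated_boundary_vertices_mult_le:
  assumes A: "A \<subseteq> grid_V n" "induces_connected A" "induces_connected (grid_V n - A)"
    and P: "P \<subseteq> grid_V n" "\<And>p. p \<in> P \<Longrightarrow> \<exists>q\<in>grid_V n. l1dist p q = 1 \<and> (p \<in> A) \<noteq> (q \<in> A)"
    and sep: "\<And>p p'. p \<in> P \<Longrightarrow> p' \<in> P \<Longrightarrow> p \<noteq> p' \<Longrightarrow> s \<le> l1dist p p'"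
    and s: "s \<le> l1diam A" "s \<le> l1diam (grid_V n - A)"
    and r: "1 \<le> r" "8 * r < s"
  shows "card P * nat r \<le> card (edge_boundary (grid_E n) A)"
proof -
  let ?B = "edge_boundary (grid_E n) A"
  define near where "near p = ?B \<inter> square p (2*r) \<times> square p (2*r)" for p
  have fin: "finite ?B" "finite P" "finite (near p)" for p
    using finite_edge_boundary[OF finite_grid_E] finite_subset[OF P(1) finite_grid_V]
    unfolding near_def by auto
  have many: "nat r \<le> card (near p)" if "p \<in> P" for p
    using P that card_edge_boundary_near_ge[OF A, of p _ r] r s unfolding near_def by fastforce
  have disjoint: "near p \<inter> near p' = {}" if "p \<in> P" "p' \<in> P" "p \<noteq> p'" for p p'
  proof (rule ccontr)
    assume "near p \<inter> near p' \<noteq> {}"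
    then obtain v where "v \<in> square p (2*r)" "v \<in> square p' (2*r)" unfolding near_def by auto
    then have "l1dist p p' \<le> 4 * (2 * r)" by (rule l1dist_le_of_square_inter)
    then show False using sep[OF that] r(2) by linarith
  qed
  have "card P * nat r \<le> (\<Sum>p\<in>P. card (near p))"
    using sum_bounded_below[of P "nat r" "\<lambda>p. card (near p)"] many by (simp add: mult.commute)
  also have "\<dots> = card (\<Union>p\<in>P. near p)"
    using fin disjoint by (intro card_UN_disjoint[symmetric]) auto
  also have "\<dots> \<le> card ?B"
    using fin by (intro card_mono) (auto simp: near_def)
  finally show ?thesis .
qed

theorem card_separated_boundary_vertices_le:
  assumes A: "A \<subseteq> grid_V n" "induces_connected A" "induces_connected (grid_V n - A)"
    and P: "P \<subseteq> grid_V n" "\<And>p. p \<in> P \<Longrightarrow> \<exists>q\<in>grid_V n. l1dist p q = 1 \<and> (p \<in> A) \<noteq> (q \<in> A)"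
    and sep: "\<And>p p'. p \<in> P \<Longrightarrow> p' \<in> P \<Longrightarrow> p \<noteq> p' \<Longrightarrow> s \<le> l1dist p p'"
    and s: "0 < s" "s \<le> l1diam A" "s \<le> l1diam (grid_V n - A)"
  shows "card P \<le> 16 * card (edge_boundary (grid_E n) A) / s"
proof (cases "s \<le> 8")
  case True
  have "real (card P) \<le> 2 * card (edge_boundary (grid_E n) A)"
    using card_boundary_vertices_le[OF P] by linarith
  also have "\<dots> \<le> 16 * card (edge_boundary (grid_E n) A) / s"
    using True s(1) by (simp add: field_simps mult_right_mono)
  finally show ?thesis .
next
  case False
  define r where "r = \<lceil>s / 8\<rceil> - 1"
  have two: "2 \<le> \<lceil>s / 8\<rceil>" using False by (simp add: le_ceiling_iff)
  have "real_of_int \<lceil>s / 8\<rceil> - 1 < s / 8" "s / 8 \<le> real_of_int \<lceil>s / 8\<rceil>"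
    "real_of_int r = real_of_int \<lceil>s / 8\<rceil> - 1" "2 \<le> real_of_int \<lceil>s / 8\<rceil>"
    using ceiling_correct[of "s / 8"] two unfolding r_def by auto
  then have r: "1 \<le> r" "8 * r < s" "s \<le> 16 * r"
    by linarith+
  have "real (card P * nat r) \<le> card (edge_boundary (grid_E n) A)"
    using card_separated_boundary_vertices_mult_le[OF A P sep s(2,3) r(1,2)] by linarith
  then have "real (card P) * r \<le> card (edge_boundary (grid_E n) A)"
    using r(1) by simp
  then have "card P \<le> card (edge_boundary (grid_E n) A) / r"
    using r(1) by (simp add: field_simps)
  also have "\<dots> = 16 * card (edge_boundary (grid_E n) A) / (16 * r)"
    by simp
  also have "\<dots> \<le> 16 * card (edge_boundary (grid_E n) A) / s"
    by (rule divide_left_mono) (use r(1,3) s(1) in auto)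
  finally show ?thesis .
qed

section \<open>A discrete co-area inequality\<close>

lemma sum_abs_diff_min_top_level:
  fixes f :: "'a \<Rightarrow> real"
  assumes E: "E \<subseteq> V \<times> V" "finite E"
    and levels: "M' < M" "\<forall>v\<in>V. f v \<le> M' \<or> f v = M"
  shows "(\<Sum>e\<in>E. \<bar>f (fst e) - f (snd e)\<bar>)
    = (\<Sum>e\<in>E. \<bar>min (f (fst e)) M' - min (f (snd e)) M'\<bar>)
      + (M - M') * card (edge_boundary E {v \<in> V. M' < f v})"
proof -
  let ?A = "{v \<in> V. M' < f v}"
  have edge: "\<bar>f (fst e) - f (snd e)\<bar>
      = \<bar>min (f (fst e)) M' - min (f (snd e)) M'\<bar> + (M - M') * (if e \<in> edge_boundary E ?A then 1 else 0)"
    if "e \<in> E" for e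
  proof -
    have "fst e \<in> V" "snd e \<in> V" using E(1) that by auto
    then have "f (fst e) \<le> M' \<or> f (fst e) = M" "f (snd e) \<le> M' \<or> f (snd e) = M"
      using levels(2) by blast+
    then show ?thesis
      using levels(1) that \<open>fst e \<in> V\<close> \<open>snd e \<in> V\<close> unfolding edge_boundary_def
      by (auto simp: min_def abs_if)
  qed
  have "(\<Sum>e\<in>E. \<bar>f (fst e) - f (snd e)\<bar>)
      = (\<Sum>e\<in>E. \<bar>min (f (fst e)) M' - min (f (snd e)) M'\<bar>)
        + (M - M') * (\<Sum>e\<in>E. if e \<in> edge_boundary E ?A then 1 else 0)"
    by (simp add: edge sum.distrib sum_distrib_left)
  also have "(\<Sum>e\<in>E. if e \<in> edge_boundary E ?A then 1 else 0 :: real) = card (edge_boundary E ?A)"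
    using E(2) by (simp add: sum.If_cases edge_boundary_def Int_absorb2 Int_def)
  finally show ?thesis .
qed

lemma L2_levels_min_top_level_le:
  fixes f :: "'a \<Rightarrow> real"
  assumes "finite V" "M' < M" "\<forall>v\<in>V. f v \<le> M' \<or> f v = M"
  shows "(\<Sum>k\<in>L. L2_set (\<lambda>t. \<Sum>v\<in>V. f v * m t v) (I k))
    \<le> (\<Sum>k\<in>L. L2_set (\<lambda>t. \<Sum>v\<in>V. min (f v) M' * m t v) (I k))
      + (M - M') * (\<Sum>k\<in>L. L2_set (\<lambda>t. \<Sum>v\<in>{v \<in> V. M' < f v}. m t v) (I k))"
proof -
  have split: "(\<Sum>v\<in>V. f v * m t v)
      = (\<Sum>v\<in>V. min (f v) M' * m t v) + (M - M') * (\<Sum>v\<in>{v \<in> V. M' < f v}. m t v)" for t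
  proof -
    have "(\<Sum>v\<in>V. f v * m t v)
        = (\<Sum>v\<in>V. min (f v) M' * m t v + (M - M') * (if M' < f v then m t v else 0))"
      using assms(2,3) by (intro sum.cong) (auto simp: min_def algebra_simps)
    also have "\<dots> = (\<Sum>v\<in>V. min (f v) M' * m t v) + (M - M') * (\<Sum>v\<in>V. if M' < f v then m t v else 0)"
      by (simp only: sum.distrib sum_distrib_left)
    also have "(\<Sum>v\<in>V. if M' < f v then m t v else 0) = (\<Sum>v\<in>{v \<in> V. M' < f v}. m t v)"
      using assms(1) by (simp add: sum.inter_filter)
    finally show ?thesis .
  qed
  have "(\<Sum>k\<in>L. L2_set (\<lambda>t. \<Sum>v\<in>V. f v * m t v) (I k))
      \<le> (\<Sum>k\<in>L. L2_set (\<lambda>t. \<Sum>v\<in>V. min (f v) M' * m t v) (I k)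
        + L2_set (\<lambda>t. (M - M') * (\<Sum>v\<in>{v \<in> V. M' < f v}. m t v)) (I k))"
    unfolding split by (intro sum_mono L2_set_triangle_ineq)
  also have "\<dots> = (\<Sum>k\<in>L. L2_set (\<lambda>t. \<Sum>v\<in>V. min (f v) M' * m t v) (I k))
      + (M - M') * (\<Sum>k\<in>L. L2_set (\<lambda>t. \<Sum>v\<in>{v \<in> V. M' < f v}. m t v) (I k))"
    using assms(2) by (simp add: L2_set_right_distrib sum.distrib sum_distrib_left)
  finally show ?thesis .
qed

lemma exists_two_largest:
  fixes S :: "'a :: linorder set"
  assumes "finite S" "1 < card S"
  obtains M M' where "M \<in> S" "M' \<in> S" "M' < M" "\<forall>x\<in>S. x \<le> M' \<or> x = M"
proof -
  define M where "M = Max S"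
  define M' where "M' = Max (S - {M})"
  have "S \<noteq> {}" using assms(2) by auto
  then have M: "M \<in> S" "\<forall>x\<in>S. x \<le> M"
    using assms(1) unfolding M_def by auto
  have "S - {M} \<noteq> {}"
  proof
    assume "S - {M} = {}"
    then have "S \<subseteq> {M}" by blast
    then show False using assms card_mono[of "{M}" S] by simp
  qed
  then have M': "M' \<in> S - {M}" "\<forall>x\<in>S. x \<noteq> M \<longrightarrow> x \<le> M'"
    using assms(1) unfolding M'_def by (intro Max_in, auto intro: Max_ge)
  then have "M' < M" "\<forall>x\<in>S. x \<le> M' \<or> x = M"
    using M(2) by force+
  with M(1) M'(1) that show ?thesis by blast
qed

text \<open>Induction on the number of values of f: lowering the top value M to the next value M'
  changes each integral by (M - M') times the mass of the level set {f = M} and the edge sum by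
  (M - M') times the size of its edge boundary.\<close>

theorem coarea_L2_levels_le:
  fixes V :: "'a set" and m :: "'i \<Rightarrow> 'a \<Rightarrow> real" and f :: "'a \<Rightarrow> real" and K :: real
  assumes V: "finite V" and E: "E \<subseteq> V \<times> V"
    and mass_zero: "\<And>k t. k \<in> L \<Longrightarrow> t \<in> I k \<Longrightarrow> (\<Sum>v\<in>V. m t v) = 0"
    and cut_bound: "\<And>A. A \<subseteq> V \<Longrightarrow>
      (\<Sum>k\<in>L. L2_set (\<lambda>t. \<Sum>v\<in>A. m t v) (I k)) \<le> K * card (edge_boundary E A)"
    and K: "0 \<le> K"
  shows "(\<Sum>k\<in>L. L2_set (\<lambda>t. \<Sum>v\<in>V. f v * m t v) (I k)) \<le> K * (\<Sum>e\<in>E. \<bar>f (fst e) - f (snd e)\<bar>)"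
proof (induction "card (f ` V)" arbitrary: f rule: less_induct)
  case less
  have finE: "finite E" using finite_subset[OF E] V by blast
  show ?case
  proof (cases "card (f ` V) \<le> 1")
    case True
    then obtain c where "\<forall>v\<in>V. f v = c"
      using V by (metis card_le_Suc0_iff_eq finite_imageI image_eqI One_nat_def)
    then have "(\<Sum>v\<in>V. f v * m t v) = c * (\<Sum>v\<in>V. m t v)" for t
      by (simp add: sum_distrib_left)
    then have "(\<Sum>k\<in>L. L2_set (\<lambda>t. \<Sum>v\<in>V. f v * m t v) (I k)) = 0"
      using mass_zero by (simp add: L2_set_0')
    then show ?thesis using K by (simp add: sum_nonneg)
  next
    case False
    have fin: "finite (f ` V)" using V by blast
    obtain M M' where M: "M \<in> f ` V" and M': "M' \<in> f ` V"
      and levels: "M' < M" "\<forall>v\<in>V. f v \<le> M' \<or> f v = M"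
      using exists_two_largest[OF fin] False by auto
    let ?g = "\<lambda>v. min (f v) M'"
    let ?A = "{v \<in> V. M' < f v}"
    have "?g ` V = f ` V - {M}"
      using levels M M' by (auto simp: min_def image_iff)
    then have "card (?g ` V) < card (f ` V)"
      using fin M False by simp
    then have IH: "(\<Sum>k\<in>L. L2_set (\<lambda>t. \<Sum>v\<in>V. ?g v * m t v) (I k))
        \<le> K * (\<Sum>e\<in>E. \<bar>?g (fst e) - ?g (snd e)\<bar>)"
      by (rule less.hyps)
    have "(\<Sum>k\<in>L. L2_set (\<lambda>t. \<Sum>v\<in>V. f v * m t v) (I k))
        \<le> (\<Sum>k\<in>L. L2_set (\<lambda>t. \<Sum>v\<in>V. ?g v * m t v) (I k))
          + (M - M') * (\<Sum>k\<in>L. L2_set (\<lambda>t. \<Sum>v\<in>?A. m t v) (I k))"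
      by (rule L2_levels_min_top_level_le[OF V levels])
    also have "\<dots> \<le> K * (\<Sum>e\<in>E. \<bar>?g (fst e) - ?g (snd e)\<bar>) + (M - M') * (K * card (edge_boundary E ?A))"
      using IH cut_bound[of ?A] levels(1) by (intro add_mono mult_left_mono) auto
    also have "\<dots> = K * (\<Sum>e\<in>E. \<bar>f (fst e) - f (snd e)\<bar>)"
      unfolding sum_abs_diff_min_top_level[OF E finE levels] by (simp add: algebra_simps)
    finally show ?thesis .
  qed
qed

lemma le_card_edge_boundary_of_not_connected:
  fixes \<Phi> :: "vtx set \<Rightarrow> real" and K :: real
  assumes subadditive: "\<And>A B. A \<inter> B = {} \<Longrightarrow> A \<union> B \<subseteq> grid_V n \<Longrightarrow> \<Phi> (A \<union> B) \<le> \<Phi> A + \<Phi> B"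
    and B: "B \<subseteq> grid_V n" "\<not> induces_connected B"
    and smaller: "\<And>A. A \<subseteq> grid_V n \<Longrightarrow>
      card (edge_boundary (grid_E n) A) < card (edge_boundary (grid_E n) B) \<Longrightarrow>
      \<Phi> A \<le> K * card (edge_boundary (grid_E n) A)"
  shows "\<Phi> B \<le> K * card (edge_boundary (grid_E n) B)"
proof -
  obtain B1 B2 where parts: "B1 \<noteq> {}" "B2 \<noteq> {}" "B1 \<inter> B2 = {}" "B = B1 \<union> B2"
    and separated: "\<forall>x\<in>B1. \<forall>y\<in>B2. l1dist x y \<noteq> 1"
    using not_induces_connected_split[OF B(2)] by blast
  have sub: "B1 \<subseteq> grid_V n" "B2 \<subseteq> grid_V n" using B(1) parts(4) by auto
  have card_B: "card (edge_boundary (grid_E n) B)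
      = card (edge_boundary (grid_E n) B1) + card (edge_boundary (grid_E n) B2)"
    unfolding parts(4) by (rule card_edge_boundary_Un_separated[OF parts(3) separated])
  obtain x1 x2 where "x1 \<in> B1" "x2 \<in> B2" using parts(1,2) by blast
  then have "0 < card (edge_boundary (grid_E n) B1)" "0 < card (edge_boundary (grid_E n) B2)"
    using card_edge_boundary_pos[of x1 B1 x2 n] card_edge_boundary_pos[of x2 B2 x1 n] parts(3) sub
    by auto
  then have "\<Phi> B1 \<le> K * card (edge_boundary (grid_E n) B1)"
    and "\<Phi> B2 \<le> K * card (edge_boundary (grid_E n) B2)"
    using smaller card_B sub by auto
  moreover have "\<Phi> B \<le> \<Phi> B1 + \<Phi> B2"
    using subadditive[OF parts(3)] sub parts(4) by simp
  ultimately show ?thesis using card_B by (simp add: algebra_simps)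
qed

theorem le_card_edge_boundary_of_connected_cuts:
  fixes \<Phi> :: "vtx set \<Rightarrow> real" and K :: real
  assumes subadditive: "\<And>A B. A \<inter> B = {} \<Longrightarrow> A \<union> B \<subseteq> grid_V n \<Longrightarrow> \<Phi> (A \<union> B) \<le> \<Phi> A + \<Phi> B"
    and complement: "\<And>A. A \<subseteq> grid_V n \<Longrightarrow> \<Phi> (grid_V n - A) = \<Phi> A"
    and empty: "\<Phi> {} = 0" and K: "0 \<le> K"
    and connected: "\<And>A. A \<subseteq> grid_V n \<Longrightarrow> A \<noteq> {} \<Longrightarrow> grid_V n - A \<noteq> {} \<Longrightarrow>
      induces_connected A \<Longrightarrow> induces_connected (grid_V n - A) \<Longrightarrow>
      \<Phi> A \<le> K * card (edge_boundary (grid_E n) A)"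
    and A: "A \<subseteq> grid_V n"
  shows "\<Phi> A \<le> K * card (edge_boundary (grid_E n) A)"
  using A
proof (induction "card (edge_boundary (grid_E n) A)" arbitrary: A rule: less_induct)
  case less
  have smaller: "\<Phi> A' \<le> K * card (edge_boundary (grid_E n) A')"
    if "A' \<subseteq> grid_V n" "card (edge_boundary (grid_E n) A') < card (edge_boundary (grid_E n) A)" for A'
    using less.hyps[OF that(2,1)] .
  have disconnected: "\<Phi> B \<le> K * card (edge_boundary (grid_E n) B)"
    if "B \<subseteq> grid_V n" "\<not> induces_connected B"
      "card (edge_boundary (grid_E n) B) = card (edge_boundary (grid_E n) A)" for B
  proof (rule le_card_edge_boundary_of_not_connected[where \<Phi> = \<Phi> and K = K, OF subadditive that(1,2)])
    fix A' assume "A' \<subseteq> grid_V n" "card (edge_boundary (grid_E n) A') < card (edge_boundary (grid_E n) B)"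
    then show "\<Phi> A' \<le> K * card (edge_boundary (grid_E n) A')" using smaller that(3) by simp
  qed
  have complement_boundary: "edge_boundary (grid_E n) (grid_V n - A) = edge_boundary (grid_E n) A"
    by (rule edge_boundary_Diff[OF grid_E_subset])
  show ?case
  proof (cases "A = {} \<or> A = grid_V n")
    case True
    then have "\<Phi> A = 0" using empty complement[of "{}"] by auto
    then show ?thesis using K by simp
  next
    case False
    show ?thesis
    proof (cases "induces_connected A")
      case False
      then show ?thesis using disconnected less.prems by blast
    next
      case A_connected: True
      show ?thesis
      proof (cases "induces_connected (grid_V n - A)")
        case False
        then show ?thesis
          using disconnected[of "grid_V n - A"] complement[OF less.prems] complement_boundary by auto
      qed (use connected less.prems False A_connected in blast)
    qed
  qed
qed

section \<open>Multiscale families of signed measures\<close>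

lemma finite_Tk: "finite (Tk k)"
proof -
  have "Tk k = {xs. set xs \<subseteq> {1, 2, 3, 4} \<and> length xs = k}" unfolding Tk_def by auto
  then show ?thesis using finite_lists_length_eq[of "{1, 2, 3, 4 :: nat}" k] by simp
qed

lemma length_of_mem_Tk: "t \<in> Tk k \<Longrightarrow> length t = k"
  unfolding Tk_def by simp

lemma Tk_subset_Tall: "k \<le> n - 2 \<Longrightarrow> Tk k \<subseteq> Tall n"
  unfolding Tall_def by auto

lemma length_le_of_mem_Tall: "t \<in> Tall n \<Longrightarrow> length t \<le> n"
  unfolding Tall_def Tk_def by auto

lemma exists_supp_point:
  assumes "smeasure m D \<noteq> 0" "D \<subseteq> grid_V n"
  obtains x where "x \<in> D" "x \<in> supp n m"
proof -
  have "\<not> (\<forall>x\<in>D. m x = 0)" using assms(1) sum.neutral unfolding smeasure_def by blast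
  then show ?thesis using that assms(2) unfolding supp_def by blast
qed

lemma smeasure_Diff:
  assumes "smeasure m (grid_V n) = 0" "A \<subseteq> grid_V n"
  shows "smeasure m (grid_V n - A) = - smeasure m A"
  using assms sum.subset_diff[OF assms(2) finite_grid_V, of m] unfolding smeasure_def by simp

lemma exists_supp_point_on_cut:
  assumes m: "smeasure m (grid_V n) = 0" "u \<in> grid_V n" "induces_connected (supp n m \<union> {u})"
    and A: "A \<subseteq> grid_V n" "smeasure m A \<noteq> 0"
  obtains p q where "p \<in> supp n m" "q \<in> grid_V n" "l1dist p q = 1" "(p \<in> A) \<noteq> (q \<in> A)"
proof -
  obtain x where x: "x \<in> A" "x \<in> supp n m" using exists_supp_point[OF A(2,1)] .
  have "smeasure m (grid_V n - A) \<noteq> 0" using smeasure_Diff[OF m(1) A(1)] A(2) by simp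
  then obtain y where y: "y \<in> grid_V n - A" "y \<in> supp n m" using exists_supp_point by blast
  obtain w w' where w: "w \<in> supp n m \<union> {u}" "w' \<in> supp n m \<union> {u}" "l1dist w w' = 1" "w \<in> A" "w' \<notin> A"
    using induces_connected_crossing[OF m(3), of x y "\<lambda>v. v \<in> A"] x y by blast
  have in_grid: "w \<in> grid_V n" "w' \<in> grid_V n"
    using w(1,2) m(2) unfolding supp_def by auto
  show ?thesis
  proof (cases "w \<in> supp n m")
    case True
    then show ?thesis using that w in_grid by blast
  next
    case False
    then have "w' \<in> supp n m" using w by auto
    moreover have "l1dist w' w = 1" using w(3) l1dist_commute by simp
    ultimately show ?thesis using that w in_grid by blast
  qed
qed

lemma sum_sqrt_two_powers_le:
  "(\<Sum>j\<le>m. sqrt 2 ^ j) \<le> (2 + sqrt 2) * sqrt 2 ^ m"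
proof (induction m)
  case (Suc m)
  have "(\<Sum>j\<le>Suc m. sqrt 2 ^ j) \<le> (2 + sqrt 2) * sqrt 2 ^ m + sqrt 2 ^ Suc m"
    using Suc by simp
  also have "(2 + sqrt 2) * sqrt 2 ^ m = (sqrt 2 + 1) * sqrt 2 ^ Suc m"
    by (simp add: algebra_simps)
  finally show ?case by (simp add: algebra_simps)
qed simp

lemma sum_sqrt_two_pow_diff_le:
  fixes Y :: real
  assumes "finite I" "\<And>k. k \<in> I \<Longrightarrow> k \<le> n \<and> 2 ^ (n - k) \<le> Y" "0 \<le> Y"
  shows "(\<Sum>k\<in>I. sqrt (2 ^ (n - k))) \<le> (2 + sqrt 2) * sqrt Y"
proof (cases "I = {}")
  case False
  define J where "J = (\<lambda>k. n - k) ` I"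
  have inj: "inj_on (\<lambda>k. n - k) I" using assms(2) by (intro inj_onI) (metis diff_diff_cancel)
  have J: "finite J" "J \<noteq> {}" using assms(1) False unfolding J_def by auto
  define m where "m = Max J"
  have "(\<Sum>k\<in>I. sqrt (2 ^ (n - k))) = (\<Sum>j\<in>J. sqrt 2 ^ j)"
    unfolding J_def by (simp add: sum.reindex[OF inj] real_sqrt_power)
  also have "\<dots> \<le> (\<Sum>j\<le>m. sqrt 2 ^ j)"
    using J unfolding m_def by (intro sum_mono2) auto
  also have "\<dots> \<le> (2 + sqrt 2) * sqrt 2 ^ m" by (rule sum_sqrt_two_powers_le)
  also have "\<dots> \<le> (2 + sqrt 2) * sqrt Y"
  proof -
    have "m \<in> J" using J unfolding m_def by simp
    then have "2 ^ m \<le> Y" using assms(2) unfolding J_def by auto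
    then have "sqrt 2 ^ m \<le> sqrt Y" by (simp add: real_sqrt_power[symmetric])
    then show ?thesis by (intro mult_left_mono) auto
  qed
  finally show ?thesis .
qed (use assms(3) in simp)

text \<open>The hypotheses (P2), (P4) and (P5) of the theorem, with the real powers of 2 and 4 written as
  natural powers; mass_le_scale and mass_le_diam are the two halves of the minimum in (P4).\<close>

locale multiscale_family =
  fixes n :: nat and C2 C4 :: real and \<mu> :: "nat list \<Rightarrow> vtx \<Rightarrow> real"
  assumes C2_pos: "0 < C2" and C4_nonneg: "0 \<le> C4"
    and mass_zero: "\<And>t. t \<in> Tall n \<Longrightarrow> smeasure (\<mu> t) (grid_V n) = 0"
    and separated: "\<And>t t' x y. t \<in> Tall n \<Longrightarrow> t' \<in> Tall n \<Longrightarrow> t \<noteq> t' \<Longrightarrow>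
      x \<in> supp n (\<mu> t) \<Longrightarrow> y \<in> supp n (\<mu> t') \<Longrightarrow>
      2 ^ (n - max (length t) (length t')) / C2 \<le> l1dist x y"
    and mass_le_scale: "\<And>t A. t \<in> Tall n \<Longrightarrow> A \<subseteq> grid_V n \<Longrightarrow>
      \<bar>smeasure (\<mu> t) A\<bar> \<le> C4 * 2 ^ (n - length t) / (2 * 4 ^ n)"
    and mass_le_diam: "\<And>t A. t \<in> Tall n \<Longrightarrow> A \<subseteq> grid_V n \<Longrightarrow>
      \<bar>smeasure (\<mu> t) A\<bar> \<le> C4 * (l1diam A + 1) / 4 ^ n"
    and connected_supp: "\<And>t. t \<in> Tall n \<Longrightarrow> \<exists>u\<in>grid_V n. induces_connected (supp n (\<mu> t) \<union> {u})"
begin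

text \<open>The left-hand side of the theorem for the indicator function of A.\<close>

definition level_norm :: "vtx set \<Rightarrow> real" where
  "level_norm A = (\<Sum>k\<in>{0..n-2}. L2_set (\<lambda>t. smeasure (\<mu> t) A) (Tk k))"

lemma level_norm_empty: "level_norm {} = 0"
  unfolding level_norm_def smeasure_def by (simp add: L2_set_0')

lemma level_norm_Un_le:
  assumes "A \<inter> B = {}" "A \<union> B \<subseteq> grid_V n"
  shows "level_norm (A \<union> B) \<le> level_norm A + level_norm B"
proof -
  have "finite A" "finite B" using assms(2) finite_subset finite_grid_V by blast+
  then have "smeasure m (A \<union> B) = smeasure m A + smeasure m B" for m
    unfolding smeasure_def using assms(1) by (simp add: sum.union_disjoint)
  then show ?thesis
    unfolding level_norm_def by (simp add: sum.distrib[symmetric] sum_mono L2_set_triangle_ineq)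
qed

lemma level_norm_Diff:
  assumes "A \<subseteq> grid_V n"
  shows "level_norm (grid_V n - A) = level_norm A"
proof -
  have "L2_set (\<lambda>t. smeasure (\<mu> t) (grid_V n - A)) (Tk k) = L2_set (\<lambda>t. smeasure (\<mu> t) A) (Tk k)"
    if "k \<in> {0..n-2}" for k
    using smeasure_Diff[OF mass_zero assms] Tk_subset_Tall[of k n] that
    unfolding L2_set_def by (intro arg_cong[where f = sqrt] sum.cong) auto
  then show ?thesis unfolding level_norm_def by (intro sum.cong) auto
qed

lemma separated_levels:
  assumes "t \<in> Tk k" "t' \<in> Tk k'" "k \<le> n - 2" "k' \<le> n - 2" "t \<noteq> t'"
    "x \<in> supp n (\<mu> t)" "y \<in> supp n (\<mu> t')"
  shows "2 ^ (n - max k k') / C2 \<le> l1dist x y"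
  using separated[of t t' x y] assms Tk_subset_Tall[of k n] Tk_subset_Tall[of k' n]
  by (auto simp: length_of_mem_Tk)

lemma coarse_levels_le:
  assumes D: "D \<subseteq> grid_V n" and L: "L \<subseteq> {0..n-2}"
    and coarse: "\<And>k. k \<in> L \<Longrightarrow> l1diam D < 2 ^ (n - k) / C2"
  shows "(\<Sum>k\<in>L. L2_set (\<lambda>t. smeasure (\<mu> t) D) (Tk k)) \<le> C4 * (l1diam D + 1) / 4 ^ n"
proof -
  define U where "U = (\<Union>k\<in>L. Tk k)"
  have finL: "finite L" using L finite_subset by blast
  have finU: "finite U" using finL finite_Tk unfolding U_def by blast
  have UT: "U \<subseteq> Tall n" using L Tk_subset_Tall[of _ n] unfolding U_def by fastforce
  have finD: "finite D" using D finite_subset finite_grid_V by blast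
  have unique: "t1 = t2"
    if t: "t1 \<in> U" "t2 \<in> U" "smeasure (\<mu> t1) D \<noteq> 0" "smeasure (\<mu> t2) D \<noteq> 0" for t1 t2
  proof (rule ccontr)
    assume "t1 \<noteq> t2"
    obtain k1 k2 where k: "k1 \<in> L" "t1 \<in> Tk k1" "k2 \<in> L" "t2 \<in> Tk k2"
      using t(1,2) unfolding U_def by blast
    obtain x y where xy: "x \<in> D" "x \<in> supp n (\<mu> t1)" "y \<in> D" "y \<in> supp n (\<mu> t2)"
      using exists_supp_point[OF t(3) D] exists_supp_point[OF t(4) D] by metis
    have "k1 \<le> n - 2" "k2 \<le> n - 2" using k(1,3) L by auto
    then have "2 ^ (n - max k1 k2) / C2 \<le> l1dist x y"
      using separated_levels[OF k(2,4) _ _ \<open>t1 \<noteq> t2\<close> xy(2,4)] by blast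
    moreover have "l1dist x y \<le> l1diam D" using l1dist_le_l1diam[OF finD xy(1,3)] .
    moreover have "l1diam D < 2 ^ (n - max k1 k2) / C2"
      using coarse k(1,3) by (cases "k1 \<le> k2") (auto simp: max_def)
    ultimately show False by linarith
  qed
  have "(\<Sum>k\<in>L. L2_set (\<lambda>t. smeasure (\<mu> t) D) (Tk k)) \<le> (\<Sum>k\<in>L. \<Sum>t\<in>Tk k. \<bar>smeasure (\<mu> t) D\<bar>)"
    by (intro sum_mono L2_set_le_sum_abs)
  also have "\<dots> = (\<Sum>t\<in>U. \<bar>smeasure (\<mu> t) D\<bar>)"
    unfolding U_def using finL finite_Tk
    by (intro sum.UNION_disjoint[symmetric]) (auto dest: length_of_mem_Tk)
  also have "\<dots> \<le> C4 * (l1diam D + 1) / 4 ^ n"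
  proof (cases "\<exists>t0\<in>U. smeasure (\<mu> t0) D \<noteq> 0")
    case True
    then obtain t0 where t0: "t0 \<in> U" "smeasure (\<mu> t0) D \<noteq> 0" by blast
    have "(\<Sum>t\<in>U. \<bar>smeasure (\<mu> t) D\<bar>) = (\<Sum>t\<in>{t0}. \<bar>smeasure (\<mu> t) D\<bar>)"
      using finU t0 unique by (intro sum.mono_neutral_right) auto
    then show ?thesis using mass_le_diam[of t0 D] t0(1) UT D by auto
  next
    case False
    then show ?thesis using C4_nonneg l1diam_nonneg[OF finD] by simp
  qed
  finally show ?thesis .
qed

text \<open>Every t counted here has, by (P5) and mass zero, a support point at the edge boundary of A,
  and by (P2) these points are 2^(n-k)/C2 apart.\<close>

lemma card_nonzero_level_le:
  assumes A: "A \<subseteq> grid_V n" "induces_connected A" "induces_connected (grid_V n - A)"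
    and k: "k \<le> n - 2"
    and fine: "2 ^ (n - k) / C2 \<le> l1diam A" "2 ^ (n - k) / C2 \<le> l1diam (grid_V n - A)"
  shows "card {t \<in> Tk k. smeasure (\<mu> t) A \<noteq> 0}
    \<le> 16 * C2 * card (edge_boundary (grid_E n) A) / 2 ^ (n - k)"
proof -
  let ?T = "{t \<in> Tk k. smeasure (\<mu> t) A \<noteq> 0}"
  let ?s = "2 ^ (n - k) / C2"
  have "\<forall>t\<in>?T. \<exists>p. p \<in> supp n (\<mu> t) \<and> (\<exists>q\<in>grid_V n. l1dist p q = 1 \<and> (p \<in> A) \<noteq> (q \<in> A))"
  proof
    fix t assume t: "t \<in> ?T"
    then have "t \<in> Tall n" using Tk_subset_Tall[OF k] by blast
    then obtain u where "u \<in> grid_V n" "induces_connected (supp n (\<mu> t) \<union> {u})"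
      using connected_supp by blast
    from exists_supp_point_on_cut[OF mass_zero[OF \<open>t \<in> Tall n\<close>] this A(1)] t
    show "\<exists>p. p \<in> supp n (\<mu> t) \<and> (\<exists>q\<in>grid_V n. l1dist p q = 1 \<and> (p \<in> A) \<noteq> (q \<in> A))"
      by blast
  qed
  then obtain pt where pt: "\<forall>t\<in>?T.
      pt t \<in> supp n (\<mu> t) \<and> (\<exists>q\<in>grid_V n. l1dist (pt t) q = 1 \<and> (pt t \<in> A) \<noteq> (q \<in> A))"
    by (rule bchoice[elim_format]) blast
  have sep: "?s \<le> l1dist (pt t) (pt t')" if t: "t \<in> ?T" "t' \<in> ?T" "t \<noteq> t'" for t t'
  proof -
    have "pt t \<in> supp n (\<mu> t)" "pt t' \<in> supp n (\<mu> t')" using pt t(1,2) by blast+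
    moreover have "t \<in> Tk k" "t' \<in> Tk k" using t(1,2) by simp_all
    ultimately show ?thesis using separated_levels[of t k t' k] k t(3) by simp
  qed
  have s_pos: "0 < ?s" using C2_pos by simp
  have "inj_on pt ?T"
  proof (rule inj_onI, rule ccontr)
    fix t t' assume "t \<in> ?T" "t' \<in> ?T" "pt t = pt t'" "t \<noteq> t'"
    then show False using sep[of t t'] s_pos by (simp add: l1dist_def)
  qed
  then have "card ?T = card (pt ` ?T)" by (simp add: card_image)
  also have "\<dots> \<le> 16 * card (edge_boundary (grid_E n) A) / ?s"
  proof (rule card_separated_boundary_vertices_le[OF A])
    show "pt ` ?T \<subseteq> grid_V n" using pt unfolding supp_def by auto
    show "\<exists>q\<in>grid_V n. l1dist p q = 1 \<and> (p \<in> A) \<noteq> (q \<in> A)" if "p \<in> pt ` ?T" for p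
      using pt that by auto
    show "?s \<le> l1dist p p'" if "p \<in> pt ` ?T" "p' \<in> pt ` ?T" "p \<noteq> p'" for p p'
      using sep that by auto
  qed (use s_pos fine in auto)
  also have "\<dots> = 16 * C2 * card (edge_boundary (grid_E n) A) / 2 ^ (n - k)"
    using C2_pos by simp
  finally show ?thesis .
qed

lemma fine_level_le:
  assumes A: "A \<subseteq> grid_V n" "induces_connected A" "induces_connected (grid_V n - A)"
    and k: "k \<le> n - 2"
    and fine: "2 ^ (n - k) / C2 \<le> l1diam A" "2 ^ (n - k) / C2 \<le> l1diam (grid_V n - A)"
  shows "L2_set (\<lambda>t. smeasure (\<mu> t) A) (Tk k)
    \<le> 2 * C4 * sqrt (C2 * card (edge_boundary (grid_E n) A)) * sqrt (2 ^ (n - k)) / 4 ^ n"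
proof -
  let ?T = "{t \<in> Tk k. smeasure (\<mu> t) A \<noteq> 0}"
  let ?b = "real (card (edge_boundary (grid_E n) A))"
  define X :: real where "X = 2 ^ (n - k)"
  define c where "c = C4 * X / (2 * 4 ^ n)"
  have X: "0 < X" unfolding X_def by simp
  have "L2_set (\<lambda>t. smeasure (\<mu> t) A) (Tk k) = L2_set (\<lambda>t. \<bar>smeasure (\<mu> t) A\<bar>) ?T"
    unfolding L2_set_def power2_abs
    by (intro arg_cong[where f = sqrt] sum.mono_neutral_right) (auto simp: finite_Tk)
  also have "\<dots> \<le> L2_set (\<lambda>t. c) ?T"
  proof (rule L2_set_mono)
    fix t assume "t \<in> ?T"
    then have t: "t \<in> Tall n" "length t = k" using Tk_subset_Tall[OF k] length_of_mem_Tk by auto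
    show "\<bar>smeasure (\<mu> t) A\<bar> \<le> c"
      using mass_le_scale[OF t(1) A(1)] t(2) unfolding c_def X_def by simp
  qed simp
  also have "\<dots> = sqrt (card ?T) * c"
    using C4_nonneg X(1) by (simp add: L2_set_constant c_def)
  also have "\<dots> \<le> sqrt (16 * C2 * ?b / X) * c"
    using card_nonzero_level_le[OF A k fine] C4_nonneg X(1) unfolding c_def X_def
    by (intro mult_right_mono real_sqrt_le_mono) auto
  also have "\<dots> = 2 * C4 * sqrt (C2 * ?b) * sqrt X / 4 ^ n"
  proof -
    have "sqrt (16 :: real) = 4" by (rule real_sqrt_unique) simp_all
    then have sq: "sqrt (16 * C2 * ?b / X) = 4 * sqrt (C2 * ?b) / sqrt X"
      by (simp add: real_sqrt_divide real_sqrt_mult)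
    have c: "c = C4 * (sqrt X * sqrt X) / (2 * 4 ^ n)"
      using X(1) unfolding c_def by simp
    have "0 < sqrt X" using X(1) by simp
    then show ?thesis unfolding sq c by (simp add: field_simps)
  qed
  finally show ?thesis unfolding X_def .
qed

lemma fine_levels_le:
  assumes A: "A \<subseteq> grid_V n" "induces_connected A" "induces_connected (grid_V n - A)"
    and L: "L \<subseteq> {0..n-2}" and fine: "\<And>k. k \<in> L \<Longrightarrow> 2 ^ (n - k) / C2 \<le> d"
    and d: "0 \<le> d" "d \<le> l1diam A" "d \<le> l1diam (grid_V n - A)"
      "d \<le> 2 * card (edge_boundary (grid_E n) A)"
  shows "(\<Sum>k\<in>L. L2_set (\<lambda>t. smeasure (\<mu> t) A) (Tk k))
    \<le> 10 * C4 * C2 * card (edge_boundary (grid_E n) A) / 4 ^ n"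
proof -
  let ?b = "real (card (edge_boundary (grid_E n) A))"
  define K where "K = 2 * C4 * sqrt (C2 * ?b) / 4 ^ n"
  have K: "0 \<le> K" unfolding K_def using C2_pos C4_nonneg by simp
  have "(\<Sum>k\<in>L. L2_set (\<lambda>t. smeasure (\<mu> t) A) (Tk k)) \<le> (\<Sum>k\<in>L. K * sqrt (2 ^ (n - k)))"
  proof (rule sum_mono)
    fix k assume "k \<in> L"
    then show "L2_set (\<lambda>t. smeasure (\<mu> t) A) (Tk k) \<le> K * sqrt (2 ^ (n - k))"
      using fine_level_le[OF A, of k] fine[of k] d(2,3) L unfolding K_def by auto
  qed
  also have "\<dots> = K * (\<Sum>k\<in>L. sqrt (2 ^ (n - k)))" by (simp add: sum_distrib_left)
  also have "\<dots> \<le> K * ((2 + sqrt 2) * sqrt (C2 * (2 * ?b)))"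
  proof (rule mult_left_mono[OF _ K])
    have "(\<Sum>k\<in>L. sqrt (2 ^ (n - k))) \<le> (2 + sqrt 2) * sqrt (C2 * d)"
    proof (rule sum_sqrt_two_pow_diff_le)
      show "finite L" using L finite_subset by blast
      show "k \<le> n \<and> 2 ^ (n - k) \<le> C2 * d" if "k \<in> L" for k
        using fine[OF that] L that C2_pos by (auto simp: field_simps)
    qed (use d(1) C2_pos in simp)
    also have "\<dots> \<le> (2 + sqrt 2) * sqrt (C2 * (2 * ?b))"
      using d(4) C2_pos by (intro mult_left_mono real_sqrt_le_mono) auto
    finally show "(\<Sum>k\<in>L. sqrt (2 ^ (n - k))) \<le> (2 + sqrt 2) * sqrt (C2 * (2 * ?b))" .
  qed
  also have "\<dots> = 2 * C4 * C2 * ((2 + sqrt 2) * sqrt 2) * ?b / 4 ^ n"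
  proof -
    have "sqrt (C2 * ?b) * sqrt (C2 * (2 * ?b)) = C2 * ?b * sqrt 2"
      using C2_pos by (simp add: real_sqrt_mult[symmetric] ac_simps) (simp add: real_sqrt_mult)
    then show ?thesis unfolding K_def by (simp add: field_simps)
  qed
  also have "\<dots> \<le> 10 * C4 * C2 * ?b / 4 ^ n"
  proof -
    have "sqrt 2 \<le> (3 / 2 :: real)" by (rule real_le_lsqrt) (auto simp: power2_eq_square)
    then have "(2 + sqrt 2) * sqrt 2 \<le> (5 :: real)" by (simp add: algebra_simps)
    then have "2 * C4 * C2 * ((2 + sqrt 2) * sqrt 2) * ?b \<le> 2 * C4 * C2 * 5 * ?b"
      using C2_pos C4_nonneg by (intro mult_right_mono mult_left_mono) auto
    then show ?thesis by (intro divide_right_mono) auto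
  qed
  finally show ?thesis .
qed

text \<open>Here D is the side of smaller diameter d.  A coarse level, where the separation
  2^(n-k)/C2 exceeds d, has at most one measure charging D.\<close>

lemma level_norm_le_connected:
  assumes A: "A \<subseteq> grid_V n" "induces_connected A" "induces_connected (grid_V n - A)"
    and nontrivial: "x \<in> A" "y \<in> grid_V n - A"
  shows "level_norm A \<le> C4 * (2 + 10 * C2) / 4 ^ n * card (edge_boundary (grid_E n) A)"
proof -
  let ?b = "real (card (edge_boundary (grid_E n) A))"
  define D where "D = (if l1diam A \<le> l1diam (grid_V n - A) then A else grid_V n - A)"
  define d where "d = l1diam D"
  have D: "D \<subseteq> grid_V n" unfolding D_def using A(1) by auto
  have d: "0 \<le> d" "d \<le> l1diam A" "d \<le> l1diam (grid_V n - A)" "d + 1 \<le> 2 * ?b"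
    using l1diam_nonneg[OF finite_subset[OF D finite_grid_V]] min_l1diam_sides_le[OF A nontrivial]
    unfolding d_def D_def by (auto split: if_splits)
  have side: "L2_set (\<lambda>t. smeasure (\<mu> t) A) (Tk k) = L2_set (\<lambda>t. smeasure (\<mu> t) D) (Tk k)"
    if "k \<in> {0..n-2}" for k
    using smeasure_Diff[OF mass_zero A(1)] Tk_subset_Tall[of k n] that unfolding D_def L2_set_def
    by (intro arg_cong[where f = sqrt] sum.cong) auto
  define Lc where "Lc = {k \<in> {0..n-2}. d < 2 ^ (n - k) / C2}"
  define Lf where "Lf = {k \<in> {0..n-2}. 2 ^ (n - k) / C2 \<le> d}"
  have "level_norm A = (\<Sum>k\<in>Lc. L2_set (\<lambda>t. smeasure (\<mu> t) A) (Tk k))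
      + (\<Sum>k\<in>Lf. L2_set (\<lambda>t. smeasure (\<mu> t) A) (Tk k))"
  proof -
    have "{0..n-2} = Lc \<union> Lf" "Lc \<inter> Lf = {}" "finite Lc" "finite Lf"
      unfolding Lc_def Lf_def by auto
    then show ?thesis unfolding level_norm_def by (simp add: sum.union_disjoint)
  qed
  also have "(\<Sum>k\<in>Lc. L2_set (\<lambda>t. smeasure (\<mu> t) A) (Tk k))
      = (\<Sum>k\<in>Lc. L2_set (\<lambda>t. smeasure (\<mu> t) D) (Tk k))"
    using side unfolding Lc_def by simp
  also have "\<dots> \<le> C4 * (d + 1) / 4 ^ n"
    unfolding d_def by (rule coarse_levels_le[OF D]) (auto simp: Lc_def d_def)
  also have "\<dots> \<le> C4 * (2 * ?b) / 4 ^ n"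
    using d(4) C4_nonneg by (intro divide_right_mono mult_left_mono) auto
  also have "(\<Sum>k\<in>Lf. L2_set (\<lambda>t. smeasure (\<mu> t) A) (Tk k)) \<le> 10 * C4 * C2 * ?b / 4 ^ n"
    by (rule fine_levels_le[OF A _ _ d(1,2,3)]) (use d(4) in \<open>auto simp: Lf_def\<close>)
  finally show ?thesis by (simp add: field_simps)
qed

lemma level_norm_le:
  assumes "A \<subseteq> grid_V n"
  shows "level_norm A \<le> C4 * (2 + 10 * C2) / 4 ^ n * card (edge_boundary (grid_E n) A)"
proof (rule le_card_edge_boundary_of_connected_cuts[OF level_norm_Un_le level_norm_Diff level_norm_empty _ _ assms])
  show "0 \<le> C4 * (2 + 10 * C2) / 4 ^ n" using C2_pos C4_nonneg by simp
  fix B assume "B \<subseteq> grid_V n" "B \<noteq> {}" "grid_V n - B \<noteq> {}"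
    "induces_connected B" "induces_connected (grid_V n - B)"
  then show "level_norm B \<le> C4 * (2 + 10 * C2) / 4 ^ n * card (edge_boundary (grid_E n) B)"
    using level_norm_le_connected by blast
qed

theorem level_integrals_le:
  "(\<Sum>k\<in>{0..n-2}. L2_set (\<lambda>t. integral_m n f (\<mu> t)) (Tk k))
    \<le> C4 * (2 + 10 * C2) / 4 ^ n * (\<Sum>e\<in>grid_E n. \<bar>f (fst e) - f (snd e)\<bar>)"
  unfolding integral_m_def
proof (rule coarea_L2_levels_le[OF finite_grid_V grid_E_subset])
  show "(\<Sum>v\<in>grid_V n. \<mu> t v) = 0" if "k \<in> {0..n-2}" "t \<in> Tk k" for k t
    using mass_zero Tk_subset_Tall[of k n] that unfolding smeasure_def by auto
  show "(\<Sum>k\<in>{0..n-2}. L2_set (\<lambda>t. \<Sum>v\<in>A. \<mu> t v) (Tk k))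
      \<le> C4 * (2 + 10 * C2) / 4 ^ n * card (edge_boundary (grid_E n) A)" if "A \<subseteq> grid_V n" for A
    using level_norm_le[OF that] unfolding level_norm_def smeasure_def .
  show "0 \<le> C4 * (2 + 10 * C2) / 4 ^ n" using C2_pos C4_nonneg by simp
qed

end

lemma two_powr_diff: "k \<le> n \<Longrightarrow> (2 :: real) powr (real n - real k) = 2 ^ (n - k)"
proof -
  assume "k \<le> n"
  then have "real n - real k = real (n - k)" by simp
  then show ?thesis by (simp only: powr_realpow zero_less_numeral)
qed

lemma two_powr_scale: "k \<le> n \<Longrightarrow> (2 :: real) powr (- real n - 1 - real k) = 2 ^ (n - k) / (2 * 4 ^ n)"
proof -
  assume "k \<le> n"
  have "- real n - 1 - real k = - real (n + 1 + k)" by simp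
  then have "(2 :: real) powr (- real n - 1 - real k) = inverse (2 ^ (n + 1 + k))"
    by (simp only: powr_minus powr_realpow zero_less_numeral)
  also have "\<dots> = 2 ^ (n - k) / (2 ^ (n + 1 + k) * 2 ^ (n - k))"
    by (simp add: inverse_eq_divide)
  also have "(2 :: real) ^ (n + 1 + k) * 2 ^ (n - k) = 2 ^ (2 * n + 1)"
    unfolding power_add[symmetric] using \<open>k \<le> n\<close> by (intro arg_cong[where f = "power 2"]) simp
  also have "(2 :: real) ^ (2 * n + 1) = 2 * 4 ^ n"
    by (simp add: power_mult)
  finally show ?thesis .
qed

lemma four_powr_minus: "(4 :: real) powr (- real n) = 1 / 4 ^ n"
  by (simp add: powr_minus powr_realpow inverse_eq_divide)

lemma le_l1dist_of_le_l1setdist: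
  assumes "ereal c \<le> l1setdist A B" "x \<in> A" "y \<in> B"
  shows "c \<le> l1dist x y"
proof -
  have "l1setdist A B \<le> ereal (l1dist x y)"
    unfolding l1setdist_def using assms(2,3) by (intro INF_lower2[of "(x, y)"]) auto
  with assms(1) have "ereal c \<le> ereal (l1dist x y)" by (rule order_trans)
  then show ?thesis by simp
qed

lemma card_grid_E_pos: "0 < card (grid_E n)"
proof -
  have "((0, 0), (1, 0)) \<in> grid_E n" unfolding grid_E_def by (simp add: mem_grid_V_iff)
  then show ?thesis using finite_grid_E card_gt_0_iff by blast
qed

lemma card_grid_E_le: "2 \<le> n \<Longrightarrow> real (card (grid_E n)) \<le> 25 / 8 * 4 ^ n"
proof -
  assume n: "2 \<le> n"
  have "grid_E n \<subseteq> (\<lambda>u. (u, (fst u + 1, snd u))) ` grid_V n \<union> (\<lambda>u. (u, (fst u, snd u + 1))) ` grid_V n"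
    unfolding grid_E_def by auto
  then have "card (grid_E n) \<le> card ((\<lambda>u. (u, (fst u + 1, snd u))) ` grid_V n \<union> (\<lambda>u. (u, (fst u, snd u + 1))) ` grid_V n)"
    by (intro card_mono) (simp_all add: finite_grid_V)
  also have "\<dots> \<le> card (grid_V n) + card (grid_V n)"
    using card_Un_le card_image_le[OF finite_grid_V] by (meson add_mono order_trans)
  finally have "card (grid_E n) \<le> card (grid_V n) + card (grid_V n)" .
  then have "card (grid_E n) \<le> 2 * (2 ^ n + 1)\<^sup>2"
    unfolding card_grid_V by simp
  then have "real (card (grid_E n)) \<le> real (2 * (2 ^ n + 1)\<^sup>2)"
    by (simp only: of_nat_le_iff)
  also have "\<dots> = 2 * (2 ^ n + 1)\<^sup>2" by simp
  also have "\<dots> \<le> 2 * (5 / 4 * 2 ^ n)\<^sup>2"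
  proof -
    have "(4 :: real) \<le> 2 ^ n" using power_increasing[OF n, of "2 :: real"] by simp
    then show ?thesis by (intro mult_left_mono power_mono) auto
  qed
  also have "\<dots> = 25 / 8 * 4 ^ n"
    by (simp add: power2_eq_square power_mult_distrib[symmetric])
  finally show ?thesis .
qed

lemma multiscale_familyI:
  fixes n :: nat and C2 C4 :: real and \<mu> :: "nat list \<Rightarrow> vtx \<Rightarrow> real"
  assumes C2: "0 < C2" and C4: "0 \<le> C4"
    and mass0: "\<forall>t\<in>Tall n. smeasure (\<mu> t) (grid_V n) = 0"
    and P2: "\<forall>t\<in>Tall n. \<forall>t'\<in>Tall n - {t}.
               l1setdist (supp n (\<mu> t)) (supp n (\<mu> t'))
                 \<ge> ereal ((1 / C2) * 2 powr (real n - real (max (length t) (length t'))))"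
    and P4: "\<forall>t\<in>Tall n. \<forall>A. A \<subseteq> grid_V n \<longrightarrow>
               \<bar>smeasure (\<mu> t) A\<bar> \<le> C4 * min (2 powr (- real n - 1 - real (length t)))
                                               (4 powr (- real n) * (l1diam A + 1))"
    and P5: "\<forall>t\<in>Tall n. \<exists>u\<in>grid_V n. induces_connected (supp n (\<mu> t) \<union> {u})"
  shows "multiscale_family n C2 C4 \<mu>"
proof
  show "0 < C2" "0 \<le> C4" by (fact C2, fact C4)
  show "smeasure (\<mu> t) (grid_V n) = 0" "\<exists>u\<in>grid_V n. induces_connected (supp n (\<mu> t) \<union> {u})"
    if "t \<in> Tall n" for t
    using mass0 P5 that by blast+
  show "2 ^ (n - max (length t) (length t')) / C2 \<le> l1dist x y"
    if t: "t \<in> Tall n" "t' \<in> Tall n" "t \<noteq> t'" and xy: "x \<in> supp n (\<mu> t)" "y \<in> supp n (\<mu> t')"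
    for t t' x y
  proof (rule le_l1dist_of_le_l1setdist[OF _ xy])
    have "max (length t) (length t') \<le> n"
      using length_le_of_mem_Tall[OF t(1)] length_le_of_mem_Tall[OF t(2)] by simp
    then have "2 ^ (n - max (length t) (length t')) / C2
        = (1 / C2) * 2 powr (real n - real (max (length t) (length t')))"
      by (simp add: two_powr_diff flip: of_nat_max)
    also have "ereal \<dots> \<le> l1setdist (supp n (\<mu> t)) (supp n (\<mu> t'))"
      using P2 t by blast
    finally show "ereal (2 ^ (n - max (length t) (length t')) / C2)
        \<le> l1setdist (supp n (\<mu> t)) (supp n (\<mu> t'))" .
  qed
  fix t A assume t: "t \<in> Tall n" and A: "A \<subseteq> grid_V n"
  have "\<bar>smeasure (\<mu> t) A\<bar> \<le> C4 * min (2 powr (- real n - 1 - real (length t)))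
                                             (4 powr (- real n) * (l1diam A + 1))"
    using P4 t A by blast
  then have bound: "\<bar>smeasure (\<mu> t) A\<bar>
      \<le> C4 * min (2 ^ (n - length t) / (2 * 4 ^ n)) ((l1diam A + 1) / 4 ^ n)"
    by (simp add: two_powr_scale[OF length_le_of_mem_Tall[OF t]] four_powr_minus)
  show "\<bar>smeasure (\<mu> t) A\<bar> \<le> C4 * 2 ^ (n - length t) / (2 * 4 ^ n)"
    using order_trans[OF bound mult_left_mono[OF min.cobounded1]] C4 by simp
  show "\<bar>smeasure (\<mu> t) A\<bar> \<le> C4 * (l1diam A + 1) / 4 ^ n"
    using order_trans[OF bound mult_left_mono[OF min.cobounded2]] C4 by simp
qed

theorem theorem3p7:
  fixes n :: nat and C2 C4 :: real and \<mu> :: "nat list \<Rightarrow> vtx \<Rightarrow> real"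
  assumes n2: "n \<ge> 2"
    and C2: "C2 \<ge> 1/2" and C4: "C4 \<ge> 1/2"
    and mass0: "\<forall>t\<in>Tall n. smeasure (\<mu> t) (grid_V n) = 0"
    and P2: "\<forall>t\<in>Tall n. \<forall>t'\<in>Tall n - {t}.
               l1setdist (supp n (\<mu> t)) (supp n (\<mu> t'))
                 \<ge> ereal ((1 / C2) * 2 powr (real n - real (max (length t) (length t'))))"
    and P4: "\<forall>t\<in>Tall n. \<forall>A. A \<subseteq> grid_V n \<longrightarrow>
               \<bar>smeasure (\<mu> t) A\<bar> \<le> C4 * min (2 powr (- real n - 1 - real (length t)))
                                               (4 powr (- real n) * (l1diam A + 1))"
    and P5: "\<forall>t\<in>Tall n. \<exists>u\<in>grid_V n. induces_connected (supp n (\<mu> t) \<union> {u})"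
  shows "\<exists>C. C \<le> C4 * (20 + 40 * C2) \<and>
    (\<forall>f :: vtx \<Rightarrow> real.
      (\<Sum>k\<in>{0..n-2}. sqrt (\<Sum>t\<in>Tk k. \<bar>integral_m n f (\<mu> t)\<bar>^2))
        \<le> C * (\<Sum>(u,v)\<in>grid_E n. \<bar>f u - f v\<bar> * (1 / real (card (grid_E n)))))"
proof -
  interpret multiscale_family n C2 C4 \<mu>
    by (rule multiscale_familyI[OF _ _ mass0 P2 P4 P5]) (use C2 C4 in auto)
  define K where "K = C4 * (2 + 10 * C2) / 4 ^ n"
  let ?E = "real (card (grid_E n))"
  have "K * ?E \<le> K * (25 / 8 * 4 ^ n)"
    using card_grid_E_le[OF n2] C2 C4 unfolding K_def by (intro mult_left_mono) auto
  also have "\<dots> \<le> C4 * (20 + 40 * C2)"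
    using C2 C4 unfolding K_def by (simp add: field_simps)
  finally have K_bound: "K * ?E \<le> C4 * (20 + 40 * C2)" .
  show ?thesis
  proof (intro exI[of _ "K * ?E"] conjI allI K_bound)
    fix f :: "vtx \<Rightarrow> real"
    have "(\<Sum>k\<in>{0..n-2}. sqrt (\<Sum>t\<in>Tk k. \<bar>integral_m n f (\<mu> t)\<bar>^2))
        = (\<Sum>k\<in>{0..n-2}. L2_set (\<lambda>t. integral_m n f (\<mu> t)) (Tk k))"
      by (simp add: L2_set_def)
    also have "\<dots> \<le> K * (\<Sum>e\<in>grid_E n. \<bar>f (fst e) - f (snd e)\<bar>)"
      unfolding K_def by (rule level_integrals_le)
    also have "\<dots> = K * ?E * (\<Sum>(u, v)\<in>grid_E n. \<bar>f u - f v\<bar> * (1 / ?E))"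
      using card_grid_E_pos[of n] by (simp add: case_prod_beta sum_divide_distrib[symmetric])
    finally show "(\<Sum>k\<in>{0..n-2}. sqrt (\<Sum>t\<in>Tk k. \<bar>integral_m n f (\<mu> t)\<bar>^2))
        \<le> K * ?E * (\<Sum>(u, v)\<in>grid_E n. \<bar>f u - f v\<bar> * (1 / ?E))" .
  qed
qed

end
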